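(* Let $G_1$ and $G_2$ be two graphs of order $n$ with the same adjacency spectra but different degree sequences. Assume there are vertices $x_1$ of $G_1$ and $x_2$ of $G_2$ such that $G_1-\{x_1\}$ and $G_2-\{x_2\}$ have the same adjacency spectra, and let $U_i$ be the vertex set of $G_i-\{x_i\}$. For any graph $\Gamma$ with a fixed vertex $y$, let $G_i'$ be the coalescence of $(G_i,x_i)$ with $(\Gamma,y)$. Then $G_1'$ and $G_2'$ have the same adjacency spectrum for every $(\Gamma,y)$. Moreover, if $G_1$ and $G_2$ both have minimum degree at least $2$ and $\prod_{v\in U_1}(\deg(v)-1)\ne\prod_{v\in U_2}(\deg(v)-1)$, then $Z_{G_1'}\ne Z_{G_2'}$; and if $G_1$ and $G_2$ both have minimum degree at least $1$ and $\prod_{v\in U_1}\deg(v)\ne\prod_{v\in U_2}\deg(v)$, then $Z_{G_1'^*}\ne Z_{G_2'^*}$. Here $\deg(v)$ is the degree of $v$ in $G_i$ for $v\in U_i$.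
   Context: Graphs are finite and simple. The coalescence of $(G,x)$ with $(\Gamma,y)$ is the disjoint union of $G$ and $\Gamma$ with the vertices $x$ and $y$ identified. $Z_G$ is the Ihara zeta function: for a graph with adjacency matrix $A$, degree matrix $D$, $n_G$ vertices and $m_G$ edges, $Z_G(t)=(1-t^2)^{n_G-m_G}\det(I-tA+t^2(D-I))^{-1}$ (equivalently the product $\prod_{[\gamma]}(1-t^{\ell(\gamma)})^{-1}$ over rotation classes of primitive closed geodesics). The cone $G^*$ is $G$ plus a new vertex adjacent to every vertex of $G$. *)

theory Defs
  imports "HOL-Analysis.Analysis" "HOL-Computational_Algebra.Computational_Algebra"
begin

type_synonym 'a graph = "'a set \<times> ('a \<Rightarrow> 'a \<Rightarrow> bool)"

definition verts :: "'a graph \<Rightarrow> 'a set" where "verts G = fst G"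
definition adj :: "'a graph \<Rightarrow> 'a \<Rightarrow> 'a \<Rightarrow> bool" where "adj G = snd G"

definition simple_graph :: "'a graph \<Rightarrow> bool" where
  "simple_graph G \<longleftrightarrow> finite (verts G) \<and>
     (\<forall>u v. adj G u v \<longrightarrow> u \<in> verts G \<and> v \<in> verts G) \<and>
     (\<forall>u v. adj G u v \<longrightarrow> adj G v u) \<and> (\<forall>u. \<not> adj G u u)"

definition degree :: "'a graph \<Rightarrow> 'a \<Rightarrow> nat" where
  "degree G v = card {u \<in> verts G. adj G v u}"

definition num_edges :: "'a graph \<Rightarrow> nat" where
  "num_edges G = card {{u, v} | u v. adj G u v}"

definition degree_sequence :: "'a graph \<Rightarrow> nat multiset" where
  "degree_sequence G = image_mset (degree G) (mset_set (verts G))"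

definition min_degree_at_least :: "'a graph \<Rightarrow> nat \<Rightarrow> bool" where
  "min_degree_at_least G k \<longleftrightarrow> (\<forall>v \<in> verts G. k \<le> degree G v)"

definition delete_vertex :: "'a graph \<Rightarrow> 'a \<Rightarrow> 'a graph" where
  "delete_vertex G x = (verts G - {x}, \<lambda>u v. adj G u v \<and> u \<noteq> x \<and> v \<noteq> x)"

text \<open>Coalescence of (G,x) with (Gamma,y): disjoint union (via a sum type) with x and y
  identified; the identified vertex is represented by Inl x.\<close>
definition coalescence :: "'a graph \<Rightarrow> 'a \<Rightarrow> 'b graph \<Rightarrow> 'b \<Rightarrow> ('a + 'b) graph" where
  "coalescence G x \<Gamma> y =
    (Inl ` verts G \<union> Inr ` (verts \<Gamma> - {y}),
     \<lambda>p q. (case (p, q) of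
        (Inl u, Inl v) \<Rightarrow> adj G u v
      | (Inr u, Inr v) \<Rightarrow> u \<noteq> y \<and> v \<noteq> y \<and> adj \<Gamma> u v
      | (Inl u, Inr w) \<Rightarrow> u = x \<and> w \<noteq> y \<and> adj \<Gamma> y w
      | (Inr w, Inl u) \<Rightarrow> u = x \<and> w \<noteq> y \<and> adj \<Gamma> w y))"

text \<open>Cone G*: new vertex None adjacent to every vertex of G.\<close>
definition cone :: "'a graph \<Rightarrow> 'a option graph" where
  "cone G = (insert None (Some ` verts G),
     \<lambda>p q. (case (p, q) of
        (Some u, Some v) \<Rightarrow> adj G u v
      | (None, Some v) \<Rightarrow> v \<in> verts G
      | (Some u, None) \<Rightarrow> u \<in> verts G
      | (None, None) \<Rightarrow> False))"

definition det_on :: "'a set \<Rightarrow> ('a \<Rightarrow> 'a \<Rightarrow> 'r::comm_ring_1) \<Rightarrow> 'r" where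
  "det_on V M = (\<Sum>p \<in> {p. p permutes V}. of_int (sign p) * (\<Prod>v \<in> V. M v (p v)))"

definition adj_matrix :: "'a graph \<Rightarrow> 'a \<Rightarrow> 'a \<Rightarrow> 'r::comm_ring_1" where
  "adj_matrix G u v = (if adj G u v then 1 else 0)"

definition char_poly :: "'a graph \<Rightarrow> complex poly" where
  "char_poly G = det_on (verts G)
     (\<lambda>u v. (if u = v then [:0, 1:] else 0) - [:adj_matrix G u v:])"

definition adj_spectrum :: "'a graph \<Rightarrow> complex multiset" where
  "adj_spectrum G = proots (char_poly G)"

text \<open>Ihara zeta function as a formal power series in t:
  Z_G(t) = (1 - t^2)^(n - m) * det(I - tA + t^2 (D - I))^(-1).\<close>
definition ihara_poly :: "'a graph \<Rightarrow> real poly" where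
  "ihara_poly G = det_on (verts G)
     (\<lambda>u v. [: (if u = v then 1 else 0), - adj_matrix G u v,
              (if u = v then of_nat (degree G u) - 1 else 0) :])"

definition ihara_zeta :: "'a graph \<Rightarrow> real fps" where
  "ihara_zeta G = (1 - fps_X ^ 2) powi (int (card (verts G)) - int (num_edges G))
                  * inverse (fps_of_poly (ihara_poly G))"

end

theory Submission imports Defs begin

text \<open>
  For the characteristic polynomial of a coalescence,
  phi(G') = phi(G) phi(Gamma - y) + phi(G - x) phi(Gamma) - t phi(G - x) phi(Gamma - y),
  so the coalescences of G1 and G2 with (Gamma, y) are cospectral. Cospectral graphs have the same
  numbers of vertices and edges, hence equal Ihara zeta functions would force equal Ihara polynomials
  det(I - tA + t^2 (D - I)), whose coefficient of t^(2n) is the product of deg v - 1 over all vertices.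
  A leaf of Gamma - y can be deleted without changing the Ihara polynomial of the coalescence, and an
  isolated vertex only contributes a factor 1 - t^2, so one may assume that all vertices of Gamma - y
  have degree at least 2. The top coefficients of the two coalescences then differ only in the factor
  coming from U1 resp. U2, because deg x1 = deg x2 (G_i and G_i - x_i have the same edge counts).
  In a cone every degree grows by one, the apex contributes |V(G')| - 1 and isolated vertices of
  Gamma - y become leaves; this turns the products of deg v - 1 into products of deg v.
\<close>

section \<open>Determinants of matrices indexed by a finite set\<close>

lemma det_on_cong:
  assumes "finite V" "\<And>u v. u \<in> V \<Longrightarrow> v \<in> V \<Longrightarrow> M u v = N u v"
  shows "det_on V M = det_on V N"
  unfolding det_on_def
proof (rule sum.cong[OF refl])
  fix p assume "p \<in> {p. p permutes V}"
  hence p: "p permutes V" by simp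
  show "of_int (sign p) * (\<Prod>v\<in>V. M v (p v)) = of_int (sign p) * (\<Prod>v\<in>V. N v (p v))"
    using assms(2) permutes_in_image[OF p] by (auto intro!: prod.cong)
qed

lemma det_on_reindex:
  assumes inj: "inj_on f V" and fin: "finite V"
  shows "det_on (f ` V) M = det_on V (\<lambda>u v. M (f u) (f v))"
proof -
  let ?h = "map_permutation V f"
  let ?h' = "map_permutation (f ` V) (inv_into V f)"
  have bf: "bij_betw f V (f ` V)" using inj by (simp add: bij_betw_def)
  have bf': "bij_betw (inv_into V f) (f ` V) V" using bij_betw_inv_into[OF bf] .
  have bij: "bij_betw ?h {p. p permutes V} {q. q permutes f ` V}"
  proof (rule bij_betw_byWitness[where f'="?h'"])
    show "\<forall>a\<in>{p. p permutes V}. ?h' (?h a) = a"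
      using map_permutation_compose_inv[OF bf] inj by (auto simp: inv_into_f_f)
    show "\<forall>a'\<in>{q. q permutes f ` V}. ?h (?h' a') = a'"
      using map_permutation_compose_inv[OF bf'] by (auto simp: f_inv_into_f)
    show "?h ` {p. p permutes V} \<subseteq> {q. q permutes f ` V}"
      using map_permutation_permutes[OF bf] by auto
    show "?h' ` {q. q permutes f ` V} \<subseteq> {p. p permutes V}"
      using map_permutation_permutes[OF bf'] by auto
  qed
  have "det_on (f ` V) M = (\<Sum>p\<in>{p. p permutes V}. of_int (sign (?h p)) * (\<Prod>z\<in>f ` V. M z (?h p z)))"
    unfolding det_on_def by (rule sum.reindex_bij_betw[OF bij, symmetric])
  also have "\<dots> = det_on V (\<lambda>u v. M (f u) (f v))"
    unfolding det_on_def
  proof (rule sum.cong[OF refl])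
    fix p assume "p \<in> {p. p permutes V}"
    hence p: "p permutes V" by simp
    have "(\<Prod>z\<in>f ` V. M z (?h p z)) = (\<Prod>v\<in>V. M (f v) (?h p (f v)))"
      by (rule prod.reindex[OF inj, unfolded comp_def])
    also have "\<dots> = (\<Prod>v\<in>V. M (f v) (f (p v)))"
      using map_permutation_apply[OF inj] by (auto intro!: prod.cong)
    finally show "of_int (sign (?h p)) * (\<Prod>z\<in>f ` V. M z (?h p z)) = of_int (sign p) * (\<Prod>v\<in>V. M (f v) (f (p v)))"
      using sign_map_permutation[OF inj p fin] by simp
  qed
  finally show ?thesis .
qed

lemma det_on_reindex_cong:
  assumes "inj_on f S" "finite S" "\<And>u v. u \<in> S \<Longrightarrow> v \<in> S \<Longrightarrow> M (f u) (f v) = N u v"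
  shows "det_on (f ` S) M = det_on S N"
  unfolding det_on_reindex[OF assms(1,2)] using assms(2,3) by (rule det_on_cong)

lemma det_on_diagonal:
  assumes "finite V" "\<And>u v. u \<in> V \<Longrightarrow> v \<in> V \<Longrightarrow> u \<noteq> v \<Longrightarrow> M u v = 0"
  shows "det_on V M = (\<Prod>v\<in>V. M v v)"
proof -
  have fin: "finite {p. p permutes V}" using assms(1) finite_permutations by blast
  have z: "(\<Sum>p\<in>{p. p permutes V} - {id}. of_int (sign p) * (\<Prod>v\<in>V. M v (p v))) = 0"
  proof (rule sum.neutral, rule ballI)
    fix p assume "p \<in> {p. p permutes V} - {id}"
    hence p: "p permutes V" "p \<noteq> id" by auto
    then obtain v where v: "p v \<noteq> v" by (auto simp: fun_eq_iff)
    hence vV: "v \<in> V" using p(1) permutes_not_in by metis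
    have "M v (p v) = 0" using assms(2)[OF vV permutes_in_image[OF p(1), THEN iffD2, OF vV]] v by auto
    hence "(\<Prod>v\<in>V. M v (p v)) = 0" using vV assms(1) by (intro prod_zero) auto
    thus "of_int (sign p) * (\<Prod>v\<in>V. M v (p v)) = 0" by simp
  qed
  have "det_on V M = of_int (sign (id::'a\<Rightarrow>'a)) * (\<Prod>v\<in>V. M v (id v))"
    unfolding det_on_def
    by (subst sum.remove[OF fin, of id]) (auto simp: permutes_id z)
  thus ?thesis by simp
qed

lemma permutes_union_decompose:
  assumes finA: "finite A" and disj: "A \<inter> B = {}"
  shows "bij_betw (\<lambda>(p, q). p \<circ> q) ({p. p permutes A} \<times> {q. q permutes B})
           {r. r permutes A \<union> B \<and> r ` A \<subseteq> A}"
proof -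
  have split: "restrict_id (p \<circ> q) A = p \<and> restrict_id (p \<circ> q) B = q"
    if p: "p permutes A" and q: "q permutes B" for p q
    using disj permutes_not_in[OF q] permutes_not_in[OF p] permutes_in_image[OF q]
    by (fastforce simp: fun_eq_iff restrict_id_def)
  have compose: "p \<circ> q permutes A \<union> B \<and> (p \<circ> q) ` A \<subseteq> A"
    if p: "p permutes A" and q: "q permutes B" for p q
  proof
    show "p \<circ> q permutes A \<union> B"
      using permutes_compose permutes_subset p q by (metis sup.cobounded1 sup.cobounded2)
    have "q ` A = A" using disj permutes_not_in[OF q] by force
    thus "(p \<circ> q) ` A \<subseteq> A" using permutes_image[OF p] by (metis image_comp order_refl)
  qed
  have merge: "restrict_id r A permutes A \<and> restrict_id r B permutes B \<and>
      restrict_id r A \<circ> restrict_id r B = r"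
    if r: "r permutes A \<union> B" "r ` A \<subseteq> A" for r
  proof -
    have inj: "inj_on r (A \<union> B)" using permutes_inj_on[OF r(1)] .
    have rA: "r ` A = A" using endo_inj_surj[OF finA r(2)] inj by (meson inj_on_Un)
    have rB: "r ` B = B"
      using permutes_image[OF r(1)] inj_on_image_set_diff[OF inj, of "A \<union> B" A] rA disj
      by (simp add: Un_Diff Diff_triv inf_commute)
    have "bij_betw r A A" "bij_betw r B B"
      using rA rB inj_on_subset[OF inj] by (auto simp: bij_betw_def)
    moreover have "restrict_id r A \<circ> restrict_id r B = r"
      using rB disj permutes_not_in[OF r(1)] by (force simp: fun_eq_iff restrict_id_def)
    ultimately show ?thesis by (simp add: permutes_restrict_id)
  qed
  show ?thesis
    by (rule bij_betw_byWitness[where f' = "\<lambda>r. (restrict_id r A, restrict_id r B)"])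
      (use split compose merge in \<open>auto simp: image_subset_iff\<close>)
qed

lemma det_on_block_triangular:
  assumes finA: "finite A" and finB: "finite B" and disj: "A \<inter> B = {}"
    and zero: "\<And>a b. a \<in> A \<Longrightarrow> b \<in> B \<Longrightarrow> M a b = 0"
  shows "det_on (A \<union> B) M = det_on A M * det_on B M"
proof -
  define T where "T = (\<lambda>r. of_int (sign r) * (\<Prod>z\<in>A \<union> B. M z (r z)))"
  have vanish: "T r = 0" if r: "r permutes A \<union> B" and a: "a \<in> A" "r a \<notin> A" for r a
  proof -
    have "r a \<in> B" using permutes_in_image[OF r] a by auto
    hence "M a (r a) = 0" using zero a by auto
    hence "(\<Prod>z\<in>A \<union> B. M z (r z)) = 0" using a finA finB by (intro prod_zero) auto
    thus ?thesis by (simp add: T_def)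
  qed
  have factor: "T (p \<circ> q) = (of_int (sign p) * (\<Prod>v\<in>A. M v (p v))) * (of_int (sign q) * (\<Prod>v\<in>B. M v (q v)))"
    if p: "p permutes A" and q: "q permutes B" for p q
  proof -
    have "sign (p \<circ> q) = sign p * sign q"
      using p q finA finB by (intro sign_compose permutes_imp_permutation)
    moreover have "(\<Prod>z\<in>A. M z ((p \<circ> q) z)) = (\<Prod>v\<in>A. M v (p v))"
      using disj permutes_not_in[OF q] by (intro prod.cong) force+
    moreover have "(\<Prod>z\<in>B. M z ((p \<circ> q) z)) = (\<Prod>v\<in>B. M v (q v))"
    proof (intro prod.cong refl)
      fix z assume "z \<in> B"
      hence "q z \<notin> A" using disj permutes_in_image[OF q] by blast
      thus "M z ((p \<circ> q) z) = M z (q z)" using permutes_not_in[OF p] by simp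
    qed
    ultimately show ?thesis
      unfolding T_def prod.union_disjoint[OF finA finB disj] by (simp add: algebra_simps)
  qed
  have "det_on (A \<union> B) M = (\<Sum>r\<in>{r. r permutes A \<union> B \<and> r ` A \<subseteq> A}. T r)"
    unfolding det_on_def T_def[symmetric]
    using finA finB vanish by (intro sum.mono_neutral_right) (auto simp: finite_permutations)
  also have "\<dots> = (\<Sum>(p, q)\<in>{p. p permutes A} \<times> {q. q permutes B}. T (p \<circ> q))"
    using sum.reindex_bij_betw[OF permutes_union_decompose[OF finA disj], of T]
    by (simp add: case_prod_unfold)
  also have "\<dots> = det_on A M * det_on B M"
    unfolding det_on_def sum_product sum.cartesian_product[symmetric]
    by (intro sum.cong) (auto simp: factor)
  finally show ?thesis .
qed

lemma det_on_row_linear: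
  assumes fin: "finite V" and x: "x \<in> V"
    and rx: "\<And>z. z \<in> V \<Longrightarrow> M x z = P x z + Q x z"
    and ro: "\<And>v z. v \<in> V \<Longrightarrow> z \<in> V \<Longrightarrow> v \<noteq> x \<Longrightarrow> M v z = P v z \<and> M v z = Q v z"
  shows "det_on V M = det_on V P + det_on V Q"
  unfolding det_on_def sum.distrib[symmetric]
proof (rule sum.cong[OF refl])
  fix p assume "p \<in> {p. p permutes V}"
  hence p: "p permutes V" by simp
  have pin: "p v \<in> V" if "v \<in> V" for v using permutes_in_image[OF p] that by simp
  have split: "\<And>F. (\<Prod>v\<in>V. F v) = F x * (\<Prod>v\<in>V - {x}. F v)"
    using prod.remove[OF fin x] by blast
  have roP: "M v z = P v z" and roQ: "M v z = Q v z" if "v \<in> V" "z \<in> V" "v \<noteq> x" for v z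
    using ro[OF that] by auto
  have "(\<Prod>v\<in>V - {x}. M v (p v)) = (\<Prod>v\<in>V - {x}. P v (p v))"
    using roP pin by (intro prod.cong) auto
  moreover have "(\<Prod>v\<in>V - {x}. M v (p v)) = (\<Prod>v\<in>V - {x}. Q v (p v))"
    using roQ pin by (intro prod.cong) auto
  ultimately show "of_int (sign p) * (\<Prod>v\<in>V. M v (p v)) =
      of_int (sign p) * (\<Prod>v\<in>V. P v (p v)) + of_int (sign p) * (\<Prod>v\<in>V. Q v (p v))"
    unfolding split[of "\<lambda>v. M v (p v)"] split[of "\<lambda>v. P v (p v)"] split[of "\<lambda>v. Q v (p v)"]
    using rx[OF pin[OF x]] by (simp add: algebra_simps)
qed

lemma det_on_swap_rows:
  assumes fin: "finite V" and a: "a \<in> V" and b: "b \<in> V" and ab: "a \<noteq> b"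
  shows "det_on V (\<lambda>v z. M (Transposition.transpose a b v) z) = - det_on V M"
proof -
  let ?t = "Transposition.transpose a b"
  have tp: "?t permutes V" using a b by (simp add: permutes_swap_id)
  have tt: "?t \<circ> ?t = id" by (simp add: fun_eq_iff)
  have bij: "bij_betw (\<lambda>p. p \<circ> ?t) {p. p permutes V} {p. p permutes V}"
    by (rule bij_betw_byWitness[where f' = "\<lambda>p. p \<circ> ?t"])
      (use tt permutes_compose[OF tp] in \<open>auto simp: o_assoc[symmetric]\<close>)
  have bt: "bij_betw ?t V V" using permutes_imp_bij[OF tp] .
  have "det_on V (\<lambda>v z. M (?t v) z) = (\<Sum>p\<in>{p. p permutes V}. of_int (sign p) * (\<Prod>v\<in>V. M v (p (?t v))))"
    unfolding det_on_def
  proof (rule sum.cong[OF refl])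
    fix p assume "p \<in> {p. p permutes V}"
    have "(\<Prod>v\<in>V. M v (p (?t v))) = (\<Prod>v\<in>V. M (?t v) (p (?t (?t v))))"
      by (rule prod.reindex_bij_betw[OF bt, symmetric])
    also have "\<dots> = (\<Prod>v\<in>V. M (?t v) (p v))" by simp
    finally show "of_int (sign p) * (\<Prod>v\<in>V. M (?t v) (p v)) = of_int (sign p) * (\<Prod>v\<in>V. M v (p (?t v)))" by simp
  qed
  also have "\<dots> = (\<Sum>p\<in>{p. p permutes V}. - (of_int (sign (p \<circ> ?t)) * (\<Prod>v\<in>V. M v ((p \<circ> ?t) v))))"
  proof (rule sum.cong[OF refl])
    fix p assume "p \<in> {p. p permutes V}"
    hence "sign (p \<circ> ?t) = sign p * sign ?t"
      by (intro sign_compose permutes_imp_permutation[OF fin]) (auto intro: tp)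
    hence "sign (p \<circ> ?t) = - sign p" using ab by (simp add: sign_swap_id)
    thus "of_int (sign p) * (\<Prod>v\<in>V. M v (p (?t v))) = - (of_int (sign (p \<circ> ?t)) * (\<Prod>v\<in>V. M v ((p \<circ> ?t) v)))"
      by simp
  qed
  also have "\<dots> = - (\<Sum>p\<in>{p. p permutes V}. of_int (sign (p \<circ> ?t)) * (\<Prod>v\<in>V. M v ((p \<circ> ?t) v)))"
    by (simp add: sum_negf)
  also have "(\<Sum>p\<in>{p. p permutes V}. of_int (sign (p \<circ> ?t)) * (\<Prod>v\<in>V. M v ((p \<circ> ?t) v))) = det_on V M"
    unfolding det_on_def by (rule sum.reindex_bij_betw[OF bij])
  finally show ?thesis .
qed

lemma det_on_diagonal_row:
  assumes fin: "finite V" and x: "x \<in> V" and z: "\<And>v. v \<in> V \<Longrightarrow> v \<noteq> x \<Longrightarrow> M x v = 0"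
  shows "det_on V M = M x x * det_on (V - {x}) M"
proof -
  have "det_on ({x} \<union> (V - {x})) M = det_on {x} M * det_on (V - {x}) M"
    by (rule det_on_block_triangular) (use fin z in auto)
  moreover have "{x} \<union> (V - {x}) = V" using x by auto
  moreover have "det_on {x} M = M x x" by (subst det_on_diagonal) auto
  ultimately show ?thesis by simp
qed

lemma det_on_unit_row:
  assumes "finite V" "x \<in> V"
  shows "det_on V (\<lambda>v z. if v = x then (if z = x then c else 0) else M v z) = c * det_on (V - {x}) M"
proof -
  let ?N = "\<lambda>v z. if v = x then (if z = x then c else 0) else M v z"
  have "det_on V ?N = ?N x x * det_on (V - {x}) ?N" by (rule det_on_diagonal_row) (use assms in auto)
  also have "det_on (V - {x}) ?N = det_on (V - {x}) M" by (rule det_on_cong) (use assms in auto)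
  finally show ?thesis by simp
qed

lemma det_on_row_single_entry:
  assumes fin: "finite V" and u: "u \<in> V" and w: "w \<in> V" and uw: "u \<noteq> w"
    and row: "\<And>z. z \<in> V \<Longrightarrow> z \<noteq> u \<Longrightarrow> M w z = 0"
    and col: "\<And>v. v \<in> V \<Longrightarrow> v \<noteq> u \<Longrightarrow> v \<noteq> w \<Longrightarrow> M v w = 0"
  shows "det_on V M = - (M w u * M u w * det_on (V - {u, w}) M)"
proof -
  let ?t = "Transposition.transpose u w"
  define S where "S = (\<lambda>v z. M (?t v) z)"
  have "det_on V M = - det_on V S" unfolding S_def by (simp add: det_on_swap_rows[OF fin u w uw])
  also have "det_on V S = S u u * det_on (V - {u}) S"
    by (rule det_on_diagonal_row[OF fin u]) (use row in \<open>auto simp: S_def\<close>)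
  also have "V - {u} = (V - {u, w}) \<union> {w}" using w uw by auto
  also have "det_on ((V - {u, w}) \<union> {w}) S = det_on (V - {u, w}) S * det_on {w} S"
    by (rule det_on_block_triangular) (use fin col in \<open>auto simp: S_def\<close>)
  also have "det_on {w} S = M u w" by (subst det_on_diagonal) (auto simp: S_def)
  also have "det_on (V - {u, w}) S = det_on (V - {u, w}) M"
    by (rule det_on_cong) (use fin in \<open>auto simp: S_def Transposition.transpose_def\<close>)
  finally show ?thesis by (simp add: S_def algebra_simps)
qed

lemma det_on_eliminate_pendant:
  fixes M :: "'a \<Rightarrow> 'a \<Rightarrow> 'r::comm_ring_1"
  assumes fin: "finite V" and u: "u \<in> V" and w: "w \<in> V" and uw: "u \<noteq> w"
    and pivot: "M w w = 1"
    and row: "\<And>z. z \<in> V \<Longrightarrow> z \<noteq> u \<Longrightarrow> z \<noteq> w \<Longrightarrow> M w z = 0"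
    and col: "\<And>v. v \<in> V \<Longrightarrow> v \<noteq> u \<Longrightarrow> v \<noteq> w \<Longrightarrow> M v w = 0"
  shows "det_on V M =
    det_on (V - {w}) (\<lambda>v z. if v = u \<and> z = u then M u u - M u w * M w u else M v z)"
proof -
  define P where "P = (\<lambda>v z. if v = w then (if z = w then 1 else 0) else M v z)"
  define Q where "Q = (\<lambda>v z. if v = w then (if z = u then M w u else 0) else M v z)"
  define R where "R = (\<lambda>v z. if v = u then (if z = u then - (M u w * M w u) else 0) else M v z)"
  have VM: "det_on V M = det_on V P + det_on V Q"
    by (rule det_on_row_linear[OF fin w]) (use uw pivot row in \<open>auto simp: P_def Q_def\<close>)
  have VP: "det_on V P = det_on (V - {w}) M"
    using det_on_unit_row[OF fin w, of 1 M] by (simp add: P_def)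
  have VQ: "det_on V Q = - (M w u * M u w * det_on (V - {u, w}) M)"
  proof -
    have "det_on V Q = - (Q w u * Q u w * det_on (V - {u, w}) Q)"
      by (rule det_on_row_single_entry[OF fin u w uw]) (use uw col in \<open>auto simp: Q_def\<close>)
    also have "det_on (V - {u, w}) Q = det_on (V - {u, w}) M"
      by (rule det_on_cong) (use fin in \<open>auto simp: Q_def\<close>)
    finally show ?thesis using uw by (simp add: Q_def)
  qed
  have finW: "finite (V - {w})" using fin by simp
  have uW: "u \<in> V - {w}" using u uw by simp
  have WM': "det_on (V - {w}) (\<lambda>v z. if v = u \<and> z = u then M u u - M u w * M w u else M v z) =
      det_on (V - {w}) M + det_on (V - {w}) R"
    by (rule det_on_row_linear[OF finW uW]) (auto simp: R_def)
  have WR: "det_on (V - {w}) R = - (M u w * M w u) * det_on (V - {u, w}) M"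
  proof -
    have "V - {w} - {u} = V - {u, w}" by auto
    thus ?thesis using det_on_unit_row[OF finW uW, of "- (M u w * M w u)" M] by (simp add: R_def)
  qed
  have "det_on V M = det_on (V - {w}) M - M u w * M w u * det_on (V - {u, w}) M"
    using VM VP VQ by (simp add: algebra_simps)
  also have "\<dots> = det_on (V - {w}) (\<lambda>v z. if v = u \<and> z = u then M u u - M u w * M w u else M v z)"
    using WM' WR by (simp add: algebra_simps)
  finally show ?thesis .
qed

lemma det_on_cut_vertex:
  assumes finA: "finite A" and finB: "finite B" and disj: "A \<inter> B = {}"
    and cA: "c \<notin> A" and cB: "c \<notin> B"
    and zero: "\<And>a b. a \<in> A \<Longrightarrow> b \<in> B \<Longrightarrow> M a b = 0 \<and> M b a = 0"
  shows "det_on (insert c (A \<union> B)) M =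
    det_on (insert c A) M * det_on B M + det_on A M * det_on (insert c B) M
    - M c c * det_on A M * det_on B M"
proof -
  define M1 where "M1 = (\<lambda>v z. if v = c \<and> z \<in> B then 0 else M v z)"
  define M2 where "M2 = (\<lambda>v z. if v = c \<and> z \<notin> B then 0 else M v z)"
  define D where "D = (\<lambda>v z. if v = c then (if z = c then M c c else 0) else M v z)"
  have fin: "finite (insert c (A \<union> B))" using finA finB by simp
  have split: "det_on (insert c (A \<union> B)) M =
      det_on (insert c (A \<union> B)) M1 + det_on (insert c (A \<union> B)) M2"
    by (rule det_on_row_linear[OF fin]) (auto simp: M1_def M2_def)
  have "det_on (insert c A \<union> B) M1 = det_on (insert c A) M1 * det_on B M1"
    using finA finB disj cB zero by (intro det_on_block_triangular) (auto simp: M1_def)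
  also have "det_on (insert c A) M1 = det_on (insert c A) M"
    using finA disj cB by (intro det_on_cong) (auto simp: M1_def)
  also have "det_on B M1 = det_on B M"
    using finB cB by (intro det_on_cong) (auto simp: M1_def)
  finally have det1: "det_on (insert c (A \<union> B)) M1 = det_on (insert c A) M * det_on B M" by simp
  have detD: "det_on (insert c B) D = M c c * det_on B M"
    using det_on_unit_row[of "insert c B" c "M c c" M] finB cB by (simp add: D_def)
  have "det_on (insert c B) M = det_on (insert c B) M2 + det_on (insert c B) D"
    using finB cB by (intro det_on_row_linear) (auto simp: M2_def D_def)
  hence detM2: "det_on (insert c B) M2 = det_on (insert c B) M - M c c * det_on B M"
    using detD by simp
  have "det_on (insert c B \<union> A) M2 = det_on (insert c B) M2 * det_on A M2"
    using finA finB disj cA zero by (intro det_on_block_triangular) (auto simp: M2_def)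
  also have "det_on A M2 = det_on A M"
    using finA cA by (intro det_on_cong) (auto simp: M2_def)
  finally have det2: "det_on (insert c (A \<union> B)) M2 =
      (det_on (insert c B) M - M c c * det_on B M) * det_on A M"
    using detM2 by (simp add: Un_commute)
  show ?thesis using split det1 det2 by (simp add: algebra_simps)
qed

section \<open>Coefficients of determinants of polynomial matrices\<close>

lemma coeff_mult_degree_bound:
  fixes p q :: "'a::comm_ring_1 poly"
  assumes "Polynomial.degree p \<le> m" "Polynomial.degree q \<le> n"
  shows "coeff (p * q) (m + n) = coeff p m * coeff q n"
proof -
  have "coeff p i * coeff q (m + n - i) = 0" if "i \<le> m + n" "i \<noteq> m" for i
    using assms that by (cases "i < m") (auto simp: coeff_eq_0)
  hence "(\<Sum>i\<in>{..m + n} - {m}. coeff p i * coeff q (m + n - i)) = 0"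
    by (intro sum.neutral) auto
  thus ?thesis by (simp add: coeff_mult sum.remove[of "{..m + n}" m])
qed

lemma coeff_prod_degree_bound:
  fixes f :: "'b \<Rightarrow> 'a::comm_ring_1 poly"
  assumes "finite V" "\<And>v. v \<in> V \<Longrightarrow> Polynomial.degree (f v) \<le> k"
  shows "coeff (\<Prod>v\<in>V. f v) (k * card V) = (\<Prod>v\<in>V. coeff (f v) k)"
  using assms
proof (induction V rule: finite_induct)
  case (insert x F)
  have "Polynomial.degree (\<Prod>v\<in>F. f v) \<le> (\<Sum>v\<in>F. k)"
    using degree_prod_sum_le[OF insert(1), of f] sum_mono[of F "Polynomial.degree \<circ> f" "\<lambda>_. k"] insert(4)
    by force
  hence "coeff (f x * (\<Prod>v\<in>F. f v)) (k + k * card F) = coeff (f x) k * coeff (\<Prod>v\<in>F. f v) (k * card F)"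
    using insert(4) by (intro coeff_mult_degree_bound) (auto simp: mult.commute)
  thus ?case using insert by simp
qed simp

definition moved :: "('a \<Rightarrow> 'a) \<Rightarrow> 'a set \<Rightarrow> 'a set" where
  "moved p V = {v \<in> V. p v \<noteq> v}"

lemma card_fixed_add_card_moved: "finite V \<Longrightarrow> card (V - moved p V) + card (moved p V) = card V"
  by (subst card_Diff_subset) (auto simp: moved_def intro: le_add_diff_inverse2 card_mono)

lemma card_moved_ge_2:
  assumes p: "p permutes V" and fin: "finite V" and nid: "p \<noteq> id"
  shows "2 \<le> card (moved p V)"
proof -
  obtain v where v: "p v \<noteq> v" using nid by (auto simp: fun_eq_iff)
  hence "v \<in> V" "p v \<in> V" "p (p v) \<noteq> p v"
    using p permutes_not_in permutes_in_image permutes_inj by (metis injD)+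
  hence "{v, p v} \<subseteq> moved p V" using v by (auto simp: moved_def)
  hence "card {v, p v} \<le> card (moved p V)" using fin by (intro card_mono) (auto simp: moved_def)
  thus ?thesis using v by simp
qed

lemma moved_eq_doubleton_imp_transpose:
  assumes p: "p permutes V" and m: "moved p V = {a, b}"
  shows "p = Transposition.transpose a b"
proof -
  have maps: "p x \<in> {a, b}" if "x \<in> {a, b}" for x
  proof -
    have "x \<in> V" "p x \<noteq> x" using that m by (auto simp: moved_def set_eq_iff)
    hence "p x \<in> V" "p (p x) \<noteq> p x" using permutes_in_image[OF p] permutes_inj[OF p] by (auto dest: injD)
    thus ?thesis using m by (auto simp: moved_def set_eq_iff)
  qed
  have "p a \<noteq> a" "p b \<noteq> b" using m by (auto simp: moved_def set_eq_iff)
  hence "p a = b" "p b = a" using maps[of a] maps[of b] by auto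
  moreover have "p x = x" if "x \<notin> {a, b}" for x
    using that m permutes_not_in[OF p] by (auto simp: moved_def set_eq_iff)
  ultimately show ?thesis by (auto simp: fun_eq_iff Transposition.transpose_def)
qed

lemma bij_betw_moved_transpositions:
  shows "bij_betw (\<lambda>p. moved p V) {p. p permutes V \<and> card (moved p V) = 2} {e. e \<subseteq> V \<and> card e = 2}"
proof (rule bij_betw_imageI)
  show "inj_on (\<lambda>p. moved p V) {p. p permutes V \<and> card (moved p V) = 2}"
  proof (rule inj_onI)
    fix p q assume "p \<in> {p. p permutes V \<and> card (moved p V) = 2}"
      and "q \<in> {p. p permutes V \<and> card (moved p V) = 2}" and "moved p V = moved q V"
    moreover from this obtain a b where "moved p V = {a, b}" "a \<noteq> b" by (auto simp: card_2_iff)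
    ultimately show "p = q" using moved_eq_doubleton_imp_transpose by (metis mem_Collect_eq)
  qed
  have moved: "moved (Transposition.transpose a b) V = {a, b}" if "a \<in> V" "b \<in> V" "a \<noteq> b" for a b
    using that by (auto simp: moved_def Transposition.transpose_def)
  have "e \<in> (\<lambda>p. moved p V) ` {p. p permutes V \<and> card (moved p V) = 2}"
    if "e \<subseteq> V" "card e = 2" for e
  proof -
    from that obtain a b where "e = {a, b}" "a \<noteq> b" "a \<in> V" "b \<in> V" by (auto simp: card_2_iff)
    with moved show ?thesis
      by (intro image_eqI[where x = "Transposition.transpose a b"]) (auto simp: permutes_swap_id)
  qed
  thus "(\<lambda>p. moved p V) ` {p. p permutes V \<and> card (moved p V) = 2} = {e. e \<subseteq> V \<and> card e = 2}"
    by (auto simp: moved_def)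
qed

lemma degree_det_term_le:
  fixes M :: "'b \<Rightarrow> 'b \<Rightarrow> 'a::comm_ring_1 poly"
  assumes fin: "finite V" and p: "p permutes V"
    and diag: "\<And>v. v \<in> V \<Longrightarrow> Polynomial.degree (M v v) \<le> k"
    and off: "\<And>u v. u \<in> V \<Longrightarrow> v \<in> V \<Longrightarrow> u \<noteq> v \<Longrightarrow> Polynomial.degree (M u v) \<le> l"
  shows "Polynomial.degree (of_int (sign p) * (\<Prod>v\<in>V. M v (p v)))
    \<le> k * card (V - moved p V) + l * card (moved p V)"
proof -
  have "Polynomial.degree (\<Prod>v\<in>V. M v (p v)) \<le> (\<Sum>v\<in>V. if p v = v then k else l)"
    using degree_prod_sum_le[OF fin, of "\<lambda>v. M v (p v)"]
      sum_mono[of V "\<lambda>v. Polynomial.degree (M v (p v))" "\<lambda>v. if p v = v then k else l"]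
      diag off permutes_in_image[OF p] by (force simp: o_def)
  also have "\<dots> = k * card (V - moved p V) + l * card (moved p V)"
    using fin by (simp add: sum.If_cases moved_def set_diff_eq Int_def conj_commute cong: conj_cong)
  finally show ?thesis by (simp add: of_int_poly degree_smult_le order.trans[OF degree_smult_le])
qed

lemma degree_det_on_le:
  fixes M :: "'b \<Rightarrow> 'b \<Rightarrow> 'a::comm_ring_1 poly"
  assumes fin: "finite V" and "\<And>u v. u \<in> V \<Longrightarrow> v \<in> V \<Longrightarrow> Polynomial.degree (M u v) \<le> k"
  shows "Polynomial.degree (det_on V M) \<le> k * card V"
  unfolding det_on_def
proof (rule degree_sum_le)
  fix p assume "p \<in> {p. p permutes V}"
  hence "p permutes V" by simp
  from degree_det_term_le[OF fin this, of M k k] assms(2)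
  have "Polynomial.degree (of_int (sign p) * (\<Prod>v\<in>V. M v (p v)))
      \<le> k * (card (V - moved p V) + card (moved p V))"
    by (simp add: algebra_simps)
  also have "card (V - moved p V) + card (moved p V) = card V" by (rule card_fixed_add_card_moved[OF fin])
  finally show "Polynomial.degree (of_int (sign p) * (\<Prod>v\<in>V. M v (p v))) \<le> k * card V" .
qed (simp add: fin finite_permutations)

lemma coeff_det_on_top:
  fixes M :: "'b \<Rightarrow> 'b \<Rightarrow> 'a::comm_ring_1 poly"
  assumes fin: "finite V" and lk: "l < k"
    and diag: "\<And>v. v \<in> V \<Longrightarrow> Polynomial.degree (M v v) \<le> k"
    and off: "\<And>u v. u \<in> V \<Longrightarrow> v \<in> V \<Longrightarrow> u \<noteq> v \<Longrightarrow> Polynomial.degree (M u v) \<le> l"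
  shows "coeff (det_on V M) (k * card V) = (\<Prod>v\<in>V. coeff (M v v) k)"
proof -
  let ?T = "\<lambda>p. of_int (sign p) * (\<Prod>v\<in>V. M v (p v))"
  have "coeff (?T p) (k * card V) = 0" if p: "p permutes V" "p \<noteq> id" for p
  proof -
    have "card (moved p V) \<noteq> 0" using card_moved_ge_2[OF p(1) fin p(2)] by simp
    moreover have "card (V - moved p V) + card (moved p V) = card V" by (rule card_fixed_add_card_moved[OF fin])
    ultimately have "k * card (V - moved p V) + l * card (moved p V) < k * card V"
      using lk by (metis add_mult_distrib2 mult_less_cancel2 nat_add_left_cancel_less not_gr0)
    thus ?thesis
      using degree_det_term_le[OF fin p(1), of M k l] diag off by (intro coeff_eq_0) fastforce
  qed
  hence "coeff (det_on V M) (k * card V) = coeff (?T id) (k * card V)"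
    unfolding det_on_def coeff_sum using fin
    by (subst sum.remove[of _ id]) (auto simp: finite_permutations permutes_id intro!: sum.neutral)
  also have "\<dots> = (\<Prod>v\<in>V. coeff (M v v) k)"
    using coeff_prod_degree_bound[OF fin, of "\<lambda>v. M v v" k] diag by simp
  finally show ?thesis .
qed

section \<open>Graphs and their characteristic polynomials\<close>

lemma simple_graph_finite: "simple_graph G \<Longrightarrow> finite (verts G)"
  by (simp add: simple_graph_def)

lemma simple_graph_adj_sym: "simple_graph G \<Longrightarrow> adj G u v \<Longrightarrow> adj G v u"
  by (simp add: simple_graph_def)

lemma simple_graph_no_loop: "simple_graph G \<Longrightarrow> \<not> adj G u u"
  by (simp add: simple_graph_def)

lemma simple_graph_adj_verts: "simple_graph G \<Longrightarrow> adj G u v \<Longrightarrow> u \<in> verts G \<and> v \<in> verts G"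
  by (simp add: simple_graph_def)

lemma graph_eqI: "verts G = verts H \<Longrightarrow> adj G = adj H \<Longrightarrow> G = H"
  by (simp add: verts_def adj_def prod_eq_iff)

lemma verts_delete_vertex [simp]: "verts (delete_vertex G x) = verts G - {x}"
  by (simp add: delete_vertex_def verts_def)

lemma adj_delete_vertex [simp]: "adj (delete_vertex G x) u v \<longleftrightarrow> adj G u v \<and> u \<noteq> x \<and> v \<noteq> x"
  by (simp add: delete_vertex_def adj_def)

lemma simple_graph_delete_vertex: "simple_graph G \<Longrightarrow> simple_graph (delete_vertex G x)"
  by (auto simp: simple_graph_def)

lemma degree_delete_vertex:
  assumes "simple_graph G" "v \<noteq> x"
  shows "degree (delete_vertex G x) v = degree G v - (if adj G v x then 1 else 0)"
proof -
  have "{u \<in> verts (delete_vertex G x). adj (delete_vertex G x) v u} = {u \<in> verts G. adj G v u} - {x}"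
    using assms by auto
  thus ?thesis
    using assms simple_graph_finite[OF assms(1)] simple_graph_adj_verts[OF assms(1), of v x]
    by (simp add: degree_def card_Diff_singleton_if)
qed

lemma degree_pos_imp_card_verts_ge_2:
  assumes G: "simple_graph G" and "x \<in> verts G" and "0 < degree G x"
  shows "2 \<le> card (verts G)"
proof -
  obtain v where "v \<in> verts G" "adj G x v" using assms(3) by (auto simp: degree_def card_gt_0_iff)
  hence "card {x, v} \<le> card (verts G)" "x \<noteq> v"
    using assms(2) simple_graph_finite[OF G] simple_graph_no_loop[OF G] by (auto intro: card_mono)
  thus ?thesis by simp
qed

definition edge_set :: "'a graph \<Rightarrow> 'a set set" where
  "edge_set G = {{u, v} | u v. adj G u v}"

lemma num_edges_eq_card_edge_set: "num_edges G = card (edge_set G)"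
  by (simp add: num_edges_def edge_set_def)

lemma doubleton_in_edge_set_iff:
  "simple_graph G \<Longrightarrow> {a, b} \<in> edge_set G \<longleftrightarrow> adj G a b"
  by (auto simp: edge_set_def doubleton_eq_iff dest: simple_graph_adj_sym)

lemma edge_set_subset:
  assumes G: "simple_graph G"
  shows "edge_set G \<subseteq> {e. e \<subseteq> verts G \<and> card e = 2}"
proof
  fix e assume "e \<in> edge_set G"
  then obtain u v where "e = {u, v}" "adj G u v" by (auto simp: edge_set_def)
  moreover have "u \<noteq> v" using calculation(2) simple_graph_no_loop[OF G] by metis
  ultimately show "e \<in> {e. e \<subseteq> verts G \<and> card e = 2}"
    using simple_graph_adj_verts[OF G] by auto
qed

lemma finite_edge_set: "simple_graph G \<Longrightarrow> finite (edge_set G)"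
  by (rule finite_subset[of _ "Pow (verts G)"]) (auto dest: edge_set_subset simple_graph_finite)

lemma num_edges_delete_vertex:
  assumes G: "simple_graph G" and x: "x \<in> verts G"
  shows "num_edges G = num_edges (delete_vertex G x) + degree G x"
proof -
  let ?N = "{v \<in> verts G. adj G x v}"
  have "e \<in> edge_set (delete_vertex G x) \<union> (\<lambda>v. {x, v}) ` ?N" if "e \<in> edge_set G" for e
  proof -
    obtain u v where e: "e = {u, v}" "adj G u v" using \<open>e \<in> edge_set G\<close> by (auto simp: edge_set_def)
    have uv: "u \<in> verts G" "v \<in> verts G" "adj G v u"
      using simple_graph_adj_verts[OF G e(2)] simple_graph_adj_sym[OF G e(2)] by auto
    consider "u = x" | "v = x" | "u \<noteq> x" "v \<noteq> x" by blast
    thus ?thesis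
    proof cases
      case 1 thus ?thesis using e uv by blast
    next
      case 2 thus ?thesis using e uv by (auto simp: insert_commute)
    next
      case 3 thus ?thesis using e by (auto simp: edge_set_def)
    qed
  qed
  moreover have "edge_set (delete_vertex G x) \<union> (\<lambda>v. {x, v}) ` ?N \<subseteq> edge_set G"
    by (auto simp: edge_set_def)
  ultimately have split: "edge_set G = edge_set (delete_vertex G x) \<union> (\<lambda>v. {x, v}) ` ?N"
    by blast
  have "card ((\<lambda>v. {x, v}) ` ?N) = card ?N"
    using simple_graph_no_loop[OF G, of x] by (intro card_image inj_onI) (auto simp: doubleton_eq_iff)
  moreover have "x \<notin> e" if "e \<in> edge_set (delete_vertex G x)" for e
    using that by (auto simp: edge_set_def)
  hence "edge_set (delete_vertex G x) \<inter> (\<lambda>v. {x, v}) ` ?N = {}" by blast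
  hence "card (edge_set G) = card (edge_set (delete_vertex G x)) + card ((\<lambda>v. {x, v}) ` ?N)"
    unfolding split using finite_edge_set[OF simple_graph_delete_vertex[OF G]] simple_graph_finite[OF G]
    by (intro card_Un_disjoint) auto
  ultimately show ?thesis by (simp add: num_edges_eq_card_edge_set degree_def)
qed

definition char_matrix :: "'a graph \<Rightarrow> 'a \<Rightarrow> 'a \<Rightarrow> complex poly" where
  "char_matrix G u v = (if u = v then [:0, 1:] else 0) - [:adj_matrix G u v:]"

lemma char_poly_eq_det_on: "char_poly G = det_on (verts G) (char_matrix G)"
  unfolding char_poly_def char_matrix_def[abs_def] ..

lemma char_matrix_diag: "simple_graph G \<Longrightarrow> char_matrix G v v = [:0, 1:]"
  by (simp add: char_matrix_def adj_matrix_def simple_graph_no_loop)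

lemma degree_char_matrix:
  "Polynomial.degree (char_matrix G v v) \<le> 1"
  "u \<noteq> v \<Longrightarrow> Polynomial.degree (char_matrix G u v) = 0"
  by (simp_all add: char_matrix_def)

lemma degree_char_poly:
  assumes G: "simple_graph G"
  shows "Polynomial.degree (char_poly G) = card (verts G)"
    and "lead_coeff (char_poly G) = 1"
proof -
  have fin: "finite (verts G)" using simple_graph_finite[OF G] .
  have "coeff (char_poly G) (1 * card (verts G)) = (\<Prod>v\<in>verts G. coeff (char_matrix G v v) 1)"
    unfolding char_poly_eq_det_on
    using degree_char_matrix[where G = G] by (intro coeff_det_on_top[OF fin, of 0]) auto
  hence top: "coeff (char_poly G) (card (verts G)) = 1" by (simp add: char_matrix_diag[OF G])
  have "Polynomial.degree (char_poly G) \<le> 1 * card (verts G)"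
    unfolding char_poly_eq_det_on
    using degree_char_matrix[where G = G] by (intro degree_det_on_le[OF fin]) (metis le_zero_eq zero_le_one)
  thus deg: "Polynomial.degree (char_poly G) = card (verts G)"
    using top le_degree[of "char_poly G" "card (verts G)"] by simp
  show "lead_coeff (char_poly G) = 1" using top by (simp add: deg)
qed

lemma char_poly_eq_of_adj_spectrum_eq:
  assumes "simple_graph G" "simple_graph H" "adj_spectrum G = adj_spectrum H"
  shows "char_poly G = char_poly H"
proof -
  have "char_poly G = smult (lead_coeff (char_poly G)) (\<Prod>z\<in>#proots (char_poly G). [:-z, 1:])"
    by (rule complex_poly_decompose_multiset[symmetric])
  also have "\<dots> = smult (lead_coeff (char_poly H)) (\<Prod>z\<in>#proots (char_poly H). [:-z, 1:])"
    using assms degree_char_poly(2)[OF assms(1)] degree_char_poly(2)[OF assms(2)]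
    by (simp add: adj_spectrum_def)
  also have "\<dots> = char_poly H" by (rule complex_poly_decompose_multiset)
  finally show ?thesis .
qed

lemma char_poly_transposition_term:
  assumes G: "simple_graph G" and ab: "a \<in> verts G" "b \<in> verts G" "a \<noteq> b"
  shows "of_int (sign (Transposition.transpose a b)) *
      (\<Prod>v\<in>verts G. char_matrix G v (Transposition.transpose a b v))
    = - monom (adj_matrix G a b) (card (verts G) - 2)"
proof -
  let ?V = "verts G" and ?t = "Transposition.transpose a b"
  have fin: "finite ?V" using simple_graph_finite[OF G] .
  have "(\<Prod>v\<in>?V. char_matrix G v (?t v)) =
      (\<Prod>v\<in>?V - {a, b}. char_matrix G v (?t v)) * (\<Prod>v\<in>{a, b}. char_matrix G v (?t v))"
    using fin ab by (subst prod.subset_diff[of "{a, b}"]) auto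
  also have "(\<Prod>v\<in>?V - {a, b}. char_matrix G v (?t v)) = [:0, 1:] ^ (card ?V - 2)"
    using fin ab by (simp add: char_matrix_diag[OF G] card_Diff_subset numeral_2_eq_2)
  also have "(\<Prod>v\<in>{a, b}. char_matrix G v (?t v)) = [:adj_matrix G a b:]"
    using ab simple_graph_adj_sym[OF G, of a b] simple_graph_adj_sym[OF G, of b a]
    by (auto simp: char_matrix_def adj_matrix_def)
  finally show ?thesis
    using ab by (simp add: sign_swap_id monom_altdef mult.commute)
qed

lemma coeff_char_poly_term_eq_0:
  assumes G: "simple_graph G" and n: "2 \<le> card (verts G)"
    and p: "p permutes verts G" and m: "card (moved p (verts G)) \<noteq> 2"
  shows "coeff (of_int (sign p) * (\<Prod>v\<in>verts G. char_matrix G v (p v))) (card (verts G) - 2) = 0"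
proof (cases "p = id")
  case True
  have "[:0, 1:] ^ card (verts G) = (monom 1 (card (verts G)) :: complex poly)" by (simp add: monom_altdef)
  thus ?thesis using True n by (simp add: char_matrix_diag[OF G] coeff_monom)
next
  case False
  have fin: "finite (verts G)" using simple_graph_finite[OF G] .
  with card_moved_ge_2[OF p fin False] m have "3 \<le> card (moved p (verts G))" by simp
  moreover have "card (verts G - moved p (verts G)) + card (moved p (verts G)) = card (verts G)"
    by (rule card_fixed_add_card_moved[OF fin])
  ultimately show ?thesis
    using degree_det_term_le[OF fin p, of "char_matrix G" 1 0] degree_char_matrix[where G = G]
    by (intro coeff_eq_0) fastforce
qed

lemma coeff_char_poly_num_edges:
  assumes G: "simple_graph G" and n: "2 \<le> card (verts G)"
  shows "coeff (char_poly G) (card (verts G) - 2) = - of_nat (num_edges G)"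
proof -
  let ?V = "verts G" and ?n = "card (verts G)"
  let ?c = "\<lambda>p. coeff (of_int (sign p) * (\<Prod>v\<in>?V. char_matrix G v (p v))) (?n - 2)"
  let ?P2 = "{p. p permutes ?V \<and> card (moved p ?V) = 2}"
  let ?E2 = "{e. e \<subseteq> ?V \<and> card e = 2}"
  define f where "f = (\<lambda>e. - (if e \<in> edge_set G then 1 else 0 :: complex))"
  have fin: "finite ?V" using simple_graph_finite[OF G] .
  have transp: "?c p = f (moved p ?V)" if p2: "p \<in> ?P2" for p
  proof -
    obtain a b where ab: "moved p ?V = {a, b}" "a \<noteq> b"
      using p2 card_2_iff[of "moved p ?V"] by auto
    hence "a \<in> ?V" "b \<in> ?V" "p = Transposition.transpose a b"
      using p2 moved_eq_doubleton_imp_transpose by (auto simp: moved_def set_eq_iff)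
    thus ?thesis
      using char_poly_transposition_term[OF G _ _ ab(2)] doubleton_in_edge_set_iff[OF G] ab
      by (simp add: f_def adj_matrix_def)
  qed
  have "coeff (char_poly G) (?n - 2) = (\<Sum>p\<in>?P2. ?c p)"
    unfolding char_poly_eq_det_on det_on_def coeff_sum
    using fin coeff_char_poly_term_eq_0[OF G n] by (intro sum.mono_neutral_right) (auto simp: finite_permutations)
  also have "\<dots> = (\<Sum>p\<in>?P2. f (moved p ?V))" using transp by simp
  also have "\<dots> = sum f ?E2" by (rule sum.reindex_bij_betw[OF bij_betw_moved_transpositions])
  also have "\<dots> = - of_nat (card (edge_set G))"
    using edge_set_subset[OF G] fin
    by (simp add: f_def sum_negf sum.If_cases Int_absorb1 Collect_conj_eq[symmetric])
  finally show ?thesis by (simp add: num_edges_eq_card_edge_set)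
qed

lemma card_verts_eq_of_char_poly_eq:
  "simple_graph G \<Longrightarrow> simple_graph H \<Longrightarrow> char_poly G = char_poly H \<Longrightarrow> card (verts G) = card (verts H)"
  by (metis degree_char_poly(1))

lemma num_edges_le_choose_2:
  assumes G: "simple_graph G"
  shows "num_edges G \<le> card (verts G) choose 2"
proof -
  have "card (edge_set G) \<le> card {e. e \<subseteq> verts G \<and> card e = 2}"
    using simple_graph_finite[OF G] by (intro card_mono edge_set_subset[OF G]) auto
  thus ?thesis by (simp add: num_edges_eq_card_edge_set n_subsets simple_graph_finite[OF G])
qed

lemma num_edges_eq_of_char_poly_eq:
  assumes G: "simple_graph G" and H: "simple_graph H" and eq: "char_poly G = char_poly H"
  shows "num_edges G = num_edges H"
proof (cases "2 \<le> card (verts G)")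
  case True
  thus ?thesis
    using coeff_char_poly_num_edges[OF G] coeff_char_poly_num_edges[OF H] eq
      card_verts_eq_of_char_poly_eq[OF G H eq] by simp
next
  case False
  thus ?thesis
    using num_edges_le_choose_2[OF G] num_edges_le_choose_2[OF H] card_verts_eq_of_char_poly_eq[OF G H eq]
    by (simp add: binomial_eq_0)
qed

section \<open>Coalescences and cones\<close>

lemma verts_coalescence [simp]:
  "verts (coalescence G x \<Gamma> y) = Inl ` verts G \<union> Inr ` (verts \<Gamma> - {y})"
  by (simp add: coalescence_def verts_def)

lemma adj_coalescence [simp]:
  "adj (coalescence G x \<Gamma> y) (Inl u) (Inl v) \<longleftrightarrow> adj G u v"
  "adj (coalescence G x \<Gamma> y) (Inr w) (Inr z) \<longleftrightarrow> w \<noteq> y \<and> z \<noteq> y \<and> adj \<Gamma> w z"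
  "adj (coalescence G x \<Gamma> y) (Inl u) (Inr w) \<longleftrightarrow> u = x \<and> w \<noteq> y \<and> adj \<Gamma> y w"
  "adj (coalescence G x \<Gamma> y) (Inr w) (Inl u) \<longleftrightarrow> u = x \<and> w \<noteq> y \<and> adj \<Gamma> w y"
  by (simp_all add: coalescence_def adj_def)

lemma simple_graph_coalescence:
  assumes G: "simple_graph G" and \<Gamma>: "simple_graph \<Gamma>" and x: "x \<in> verts G"
  shows "simple_graph (coalescence G x \<Gamma> y)"
  unfolding simple_graph_def
proof (intro conjI allI impI)
  show "finite (verts (coalescence G x \<Gamma> y))"
    using simple_graph_finite[OF G] simple_graph_finite[OF \<Gamma>] by simp
  fix p q assume a: "adj (coalescence G x \<Gamma> y) p q"
  show "p \<in> verts (coalescence G x \<Gamma> y)" "q \<in> verts (coalescence G x \<Gamma> y)"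
    using a x simple_graph_adj_verts[OF G] simple_graph_adj_verts[OF \<Gamma>] by (cases p; cases q; auto)+
  show "adj (coalescence G x \<Gamma> y) q p"
    using a simple_graph_adj_sym[OF G] simple_graph_adj_sym[OF \<Gamma>] by (cases p; cases q) auto
next
  fix p show "\<not> adj (coalescence G x \<Gamma> y) p p"
    using simple_graph_no_loop[OF G] simple_graph_no_loop[OF \<Gamma>] by (cases p) auto
qed

lemma char_poly_coalescence:
  assumes G: "simple_graph G" and \<Gamma>: "simple_graph \<Gamma>" and x: "x \<in> verts G" and y: "y \<in> verts \<Gamma>"
  shows "char_poly (coalescence G x \<Gamma> y) =
    char_poly G * char_poly (delete_vertex \<Gamma> y) + char_poly (delete_vertex G x) * char_poly \<Gamma>
    - [:0, 1:] * char_poly (delete_vertex G x) * char_poly (delete_vertex \<Gamma> y)"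
proof -
  let ?C = "char_matrix (coalescence G x \<Gamma> y)"
  let ?A = "Inl ` (verts G - {x}) :: ('a + 'b) set" and ?B = "Inr ` (verts \<Gamma> - {y}) :: ('a + 'b) set"
  define \<phi> where "\<phi> = (\<lambda>w. if w = y then Inl x else (Inr w :: 'a + 'b))"
  have finG: "finite (verts G)" and fin\<Gamma>: "finite (verts \<Gamma>)"
    using simple_graph_finite[OF G] simple_graph_finite[OF \<Gamma>] .
  have zero: "?C a b = 0 \<and> ?C b a = 0" if "a \<in> ?A" "b \<in> ?B" for a b
    using that by (auto simp: char_matrix_def adj_matrix_def)
  have "det_on (insert (Inl x) (?A \<union> ?B)) ?C =
      det_on (insert (Inl x) ?A) ?C * det_on ?B ?C + det_on ?A ?C * det_on (insert (Inl x) ?B) ?C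
      - ?C (Inl x) (Inl x) * det_on ?A ?C * det_on ?B ?C"
    using finG fin\<Gamma> zero by (intro det_on_cut_vertex) auto
  moreover have "insert (Inl x) (?A \<union> ?B) = verts (coalescence G x \<Gamma> y)" using x by auto
  moreover have "insert (Inl x) ?A = Inl ` verts G" using x by auto
  moreover have "det_on (Inl ` verts G) ?C = char_poly G"
    using finG unfolding char_poly_eq_det_on
    by (intro det_on_reindex_cong) (auto simp: char_matrix_def adj_matrix_def)
  moreover have "det_on ?A ?C = char_poly (delete_vertex G x)"
    using finG unfolding char_poly_eq_det_on verts_delete_vertex
    by (intro det_on_reindex_cong) (auto simp: char_matrix_def adj_matrix_def)
  moreover have "det_on ?B ?C = char_poly (delete_vertex \<Gamma> y)"
    using fin\<Gamma> unfolding char_poly_eq_det_on verts_delete_vertex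
    by (intro det_on_reindex_cong) (auto simp: char_matrix_def adj_matrix_def)
  moreover have "insert (Inl x) ?B = \<phi> ` verts \<Gamma>" using y by (auto simp: \<phi>_def)
  moreover have "det_on (\<phi> ` verts \<Gamma>) ?C = char_poly \<Gamma>"
    using fin\<Gamma> simple_graph_no_loop[OF \<Gamma>] simple_graph_no_loop[OF G] unfolding char_poly_eq_det_on
    by (intro det_on_reindex_cong) (auto simp: \<phi>_def inj_on_def char_matrix_def adj_matrix_def)
  moreover have "?C (Inl x) (Inl x) = [:0, 1:]"
    using simple_graph_no_loop[OF G] by (simp add: char_matrix_def adj_matrix_def)
  ultimately show ?thesis by (simp add: char_poly_eq_det_on[of "coalescence G x \<Gamma> y"] mult.assoc)
qed

lemma finite_neighbours: "simple_graph G \<Longrightarrow> finite {z \<in> verts G. P z}"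
  by (auto dest: simple_graph_finite)

lemma degree_coalescence_Inl:
  assumes "u \<in> verts G" "u \<noteq> x"
  shows "degree (coalescence G x \<Gamma> y) (Inl u) = degree G u"
proof -
  have "{z \<in> verts (coalescence G x \<Gamma> y). adj (coalescence G x \<Gamma> y) (Inl u) z} = Inl ` {v \<in> verts G. adj G u v}"
    using assms by (auto simp: image_iff)
  thus ?thesis unfolding degree_def by (simp add: card_image)
qed

lemma degree_coalescence_root:
  fixes G :: "'a graph" and \<Gamma> :: "'b graph"
  assumes G: "simple_graph G" and \<Gamma>: "simple_graph \<Gamma>"
  shows "degree (coalescence G x \<Gamma> y) (Inl x) = degree G x + degree \<Gamma> y"
proof -
  have "{z \<in> verts (coalescence G x \<Gamma> y). adj (coalescence G x \<Gamma> y) (Inl x) z} =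
      Inl ` {v \<in> verts G. adj G x v} \<union> Inr ` {w \<in> verts \<Gamma>. adj \<Gamma> y w}"
    using simple_graph_no_loop[OF \<Gamma>, of y] by (auto simp: image_iff)
  moreover have "card (Inl ` {v \<in> verts G. adj G x v} \<union> Inr ` {w \<in> verts \<Gamma>. adj \<Gamma> y w} :: ('a + 'b) set)
      = degree G x + degree \<Gamma> y"
    using finite_neighbours[OF G] finite_neighbours[OF \<Gamma>]
    by (subst card_Un_disjoint) (auto simp: card_image degree_def)
  ultimately show ?thesis by (simp add: degree_def)
qed

lemma degree_coalescence_Inr:
  fixes G :: "'a graph" and \<Gamma> :: "'b graph"
  assumes \<Gamma>: "simple_graph \<Gamma>" and x: "x \<in> verts G" and w: "w \<noteq> y"
  shows "degree (coalescence G x \<Gamma> y) (Inr w) = degree \<Gamma> w"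
proof -
  let ?N = "{v \<in> verts \<Gamma>. adj \<Gamma> w v}"
  let ?f = "\<lambda>v. if v = y then Inl x else (Inr v :: 'a + 'b)"
  have N: "{z \<in> verts (coalescence G x \<Gamma> y). adj (coalescence G x \<Gamma> y) (Inr w) z} = ?f ` ?N"
    using x w simple_graph_adj_verts[OF \<Gamma>] by (auto simp: image_iff split: if_splits)
  have "card (?f ` ?N) = card ?N" by (rule card_image) (auto simp: inj_on_def)
  thus ?thesis by (simp only: degree_def N)
qed

lemma delete_vertex_coalescence:
  assumes "w \<noteq> y"
  shows "delete_vertex (coalescence G x \<Gamma> y) (Inr w) = coalescence G x (delete_vertex \<Gamma> w) y"
proof (rule graph_eqI)
  show "adj (delete_vertex (coalescence G x \<Gamma> y) (Inr w)) = adj (coalescence G x (delete_vertex \<Gamma> w) y)"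
  proof (intro ext)
    fix p q
    show "adj (delete_vertex (coalescence G x \<Gamma> y) (Inr w)) p q = adj (coalescence G x (delete_vertex \<Gamma> w) y) p q"
      using assms by (cases p; cases q) auto
  qed
qed auto

lemma prod_degree_coalescence:
  assumes G: "simple_graph G" and \<Gamma>: "simple_graph \<Gamma>" and x: "x \<in> verts G"
  shows "(\<Prod>p\<in>verts (coalescence G x \<Gamma> y). f (degree (coalescence G x \<Gamma> y) p)) =
    (\<Prod>u\<in>verts G - {x}. f (degree G u)) * f (degree G x + degree \<Gamma> y) *
    (\<Prod>w\<in>verts \<Gamma> - {y}. f (degree \<Gamma> w))"
proof -
  let ?H = "coalescence G x \<Gamma> y"
  have finG: "finite (verts G)" and fin\<Gamma>: "finite (verts \<Gamma>)"
    using simple_graph_finite[OF G] simple_graph_finite[OF \<Gamma>] .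
  have V: "verts ?H = insert (Inl x) (Inl ` (verts G - {x})) \<union> Inr ` (verts \<Gamma> - {y})" using x by auto
  have "(\<Prod>p\<in>verts ?H. f (degree ?H p)) = (\<Prod>p\<in>insert (Inl x) (Inl ` (verts G - {x})). f (degree ?H p)) *
      (\<Prod>p\<in>Inr ` (verts \<Gamma> - {y}). f (degree ?H p))"
    unfolding V by (rule prod.union_disjoint) (use finG fin\<Gamma> in auto)
  also have "\<dots> = f (degree ?H (Inl x)) *
      (\<Prod>u\<in>verts G - {x}. f (degree ?H (Inl u))) * (\<Prod>w\<in>verts \<Gamma> - {y}. f (degree ?H (Inr w)))"
    using finG by (subst prod.insert) (auto simp: prod.reindex)
  also have "\<dots> = f (degree G x + degree \<Gamma> y) *
      (\<Prod>u\<in>verts G - {x}. f (degree G u)) * (\<Prod>w\<in>verts \<Gamma> - {y}. f (degree \<Gamma> w))"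
    by (simp add: degree_coalescence_root[OF G \<Gamma>] degree_coalescence_Inl degree_coalescence_Inr[OF \<Gamma> x]
        cong: prod.cong_simp)
  finally show ?thesis by (simp add: ac_simps)
qed

lemma verts_cone [simp]: "verts (cone G) = insert None (Some ` verts G)"
  by (simp add: cone_def verts_def)

lemma adj_cone [simp]:
  "adj (cone G) (Some u) (Some v) \<longleftrightarrow> adj G u v"
  "adj (cone G) None (Some v) \<longleftrightarrow> v \<in> verts G"
  "adj (cone G) (Some v) None \<longleftrightarrow> v \<in> verts G"
  "\<not> adj (cone G) None None"
  by (simp_all add: cone_def adj_def)

lemma simple_graph_cone:
  assumes G: "simple_graph G"
  shows "simple_graph (cone G)"
  unfolding simple_graph_def
proof (intro conjI allI impI)
  show "finite (verts (cone G))" using simple_graph_finite[OF G] by simp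
  fix p q assume a: "adj (cone G) p q"
  show "p \<in> verts (cone G)" "q \<in> verts (cone G)"
    using a simple_graph_adj_verts[OF G] by (cases p; cases q; auto)+
  show "adj (cone G) q p" using a simple_graph_adj_sym[OF G] by (cases p; cases q) auto
next
  fix p show "\<not> adj (cone G) p p" using simple_graph_no_loop[OF G] by (cases p) auto
qed

lemma card_verts_cone: "simple_graph G \<Longrightarrow> card (verts (cone G)) = card (verts G) + 1"
  by (simp add: card_image simple_graph_finite)

lemma degree_cone_Some:
  assumes G: "simple_graph G" and v: "v \<in> verts G"
  shows "degree (cone G) (Some v) = degree G v + 1"
proof -
  have "{z \<in> verts (cone G). adj (cone G) (Some v) z} = insert None (Some ` {u \<in> verts G. adj G v u})"
    using v by (auto simp: image_iff)
  thus ?thesis using finite_neighbours[OF G] by (simp add: degree_def card_image)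
qed

lemma degree_cone_None: "degree (cone G) None = card (verts G)"
proof -
  have "{z \<in> verts (cone G). adj (cone G) None z} = Some ` verts G" by auto
  thus ?thesis by (simp add: degree_def card_image)
qed

lemma delete_vertex_cone: "delete_vertex (cone G) (Some w) = cone (delete_vertex G w)"
proof (rule graph_eqI)
  show "adj (delete_vertex (cone G) (Some w)) = adj (cone (delete_vertex G w))"
  proof (intro ext)
    fix p q show "adj (delete_vertex (cone G) (Some w)) p q = adj (cone (delete_vertex G w)) p q"
      by (cases p; cases q) auto
  qed
qed auto

lemma num_edges_cone:
  assumes G: "simple_graph G"
  shows "num_edges (cone G) = num_edges G + card (verts G)"
proof -
  let ?I = "(\<lambda>e. Some ` e) ` edge_set G" and ?S = "(\<lambda>v. {None, Some v}) ` verts G"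
  have sub: "e \<in> ?I \<union> ?S" if e: "e \<in> edge_set (cone G)" for e
  proof -
    obtain p q where e: "e = {p, q}" "adj (cone G) p q" using e by (auto simp: edge_set_def)
    have "Some ` {u, v} \<in> ?I" if "adj G u v" for u v
      using that unfolding edge_set_def by (intro imageI) blast
    thus ?thesis using e by (cases p; cases q) (auto simp: insert_commute)
  qed
  have inner: "Some ` e \<in> edge_set (cone G)" if "e \<in> edge_set G" for e
  proof -
    obtain u v where "e = {u, v}" "adj G u v" using \<open>e \<in> edge_set G\<close> by (auto simp: edge_set_def)
    hence "Some ` e = {Some u, Some v}" "adj (cone G) (Some u) (Some v)" by auto
    thus ?thesis unfolding edge_set_def by blast
  qed
  have spoke: "{None, Some v} \<in> edge_set (cone G)" if "v \<in> verts G" for v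
    using that adj_cone(2)[of G v] unfolding edge_set_def by blast
  have split: "edge_set (cone G) = ?I \<union> ?S"
    using sub inner spoke by (intro equalityI subsetI) auto
  have "None \<notin> e" if "e \<in> ?I" for e using that by blast
  hence "card (edge_set (cone G)) = card ?I + card ?S"
    unfolding split using finite_edge_set[OF G] simple_graph_finite[OF G]
    by (intro card_Un_disjoint) auto
  also have "card ?I = card (edge_set G)"
    by (rule card_image) (simp add: inj_on_def inj_image_eq_iff)
  also have "card ?S = card (verts G)" by (rule card_image) (auto simp: inj_on_def doubleton_eq_iff)
  finally show ?thesis by (simp add: num_edges_eq_card_edge_set)
qed

lemma prod_degree_cone:
  assumes G: "simple_graph G"
  shows "(\<Prod>p\<in>verts (cone G). f (degree (cone G) p)) =
    f (card (verts G)) * (\<Prod>v\<in>verts G. f (degree G v + 1))"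
  using simple_graph_finite[OF G]
  by (simp add: prod.reindex degree_cone_None degree_cone_Some[OF G] cong: prod.cong_simp)

section \<open>The Ihara polynomial\<close>

definition ihara_matrix :: "'a graph \<Rightarrow> 'a \<Rightarrow> 'a \<Rightarrow> real poly" where
  "ihara_matrix G u v = [: (if u = v then 1 else 0), - adj_matrix G u v,
     (if u = v then of_nat (degree G u) - 1 else 0) :]"

lemma ihara_poly_eq_det_on: "ihara_poly G = det_on (verts G) (ihara_matrix G)"
  unfolding ihara_poly_def ihara_matrix_def[abs_def] ..

lemma coeff_ihara_poly_0:
  assumes G: "simple_graph G"
  shows "coeff (ihara_poly G) 0 = 1"
proof -
  have "coeff (ihara_poly G) 0 = det_on (verts G) (\<lambda>u v. poly (ihara_matrix G u v) 0)"
    unfolding ihara_poly_eq_det_on det_on_def poly_0_coeff_0[symmetric] by (simp add: poly_sum poly_prod)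
  also have "\<dots> = 1"
    by (subst det_on_diagonal[OF simple_graph_finite[OF G]]) (simp_all add: ihara_matrix_def)
  finally show ?thesis .
qed

lemma coeff_ihara_poly_top:
  assumes G: "simple_graph G"
  shows "coeff (ihara_poly G) (2 * card (verts G)) = (\<Prod>v\<in>verts G. real (degree G v) - 1)"
  unfolding ihara_poly_eq_det_on
  by (subst coeff_det_on_top[OF simple_graph_finite[OF G], of 1])
    (simp_all add: ihara_matrix_def degree_pCons_le numeral_2_eq_2)

lemma ihara_poly_delete_isolated:
  assumes G: "simple_graph G" and w: "w \<in> verts G" and d: "degree G w = 0"
  shows "ihara_poly G = [:1, 0, -1:] * ihara_poly (delete_vertex G w)"
proof -
  have fin: "finite (verts G)" using simple_graph_finite[OF G] .
  have "\<not> adj G w z" for z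
    using d fin simple_graph_adj_verts[OF G] by (auto simp: degree_def card_eq_0_iff)
  hence isolated: "\<not> adj G w z" "\<not> adj G z w" for z
    using simple_graph_adj_sym[OF G] by blast+
  have "ihara_poly G = ihara_matrix G w w * det_on (verts G - {w}) (ihara_matrix G)"
    unfolding ihara_poly_eq_det_on
    by (rule det_on_diagonal_row[OF fin w]) (simp add: ihara_matrix_def adj_matrix_def isolated)
  also have "det_on (verts G - {w}) (ihara_matrix G) = ihara_poly (delete_vertex G w)"
    unfolding ihara_poly_eq_det_on verts_delete_vertex using fin
    by (intro det_on_cong) (auto simp: ihara_matrix_def adj_matrix_def degree_delete_vertex[OF G] isolated)
  finally show ?thesis by (simp add: ihara_matrix_def adj_matrix_def d isolated)
qed

lemma ihara_matrix_delete_leaf: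
  assumes G: "simple_graph G" and uw: "adj G u w" and leaf: "\<And>z. adj G z w \<Longrightarrow> z = u"
    and "v \<noteq> w" "z \<noteq> w"
  shows "ihara_matrix (delete_vertex G w) v z = (if v = u \<and> z = u
    then ihara_matrix G u u - ihara_matrix G u w * ihara_matrix G w u else ihara_matrix G v z)"
proof (cases "v = u \<and> z = u")
  case True
  have "u \<noteq> w" "w \<in> verts G" using uw simple_graph_no_loop[OF G] simple_graph_adj_verts[OF G] by metis+
  hence "1 \<le> degree G u" using uw simple_graph_finite[OF G] by (auto simp: degree_def Suc_le_eq card_gt_0_iff)
  hence "real (degree (delete_vertex G w) u) - 1 = real (degree G u) - 1 - 1"
    using uw degree_delete_vertex[OF G \<open>u \<noteq> w\<close>] by (simp add: of_nat_diff)
  thus ?thesis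
    using True uw simple_graph_adj_sym[OF G uw] simple_graph_no_loop[OF G] \<open>u \<noteq> w\<close>
    by (simp add: ihara_matrix_def adj_matrix_def)
next
  case False
  have "degree (delete_vertex G w) v = degree G v" if "v = z"
    using that False leaf[of v] assms(4) degree_delete_vertex[OF G, of v w] by auto
  thus ?thesis using False assms(4,5) simple_graph_no_loop[OF G]
    by (cases "v = z") (simp_all add: ihara_matrix_def adj_matrix_def)
qed

lemma ihara_poly_delete_leaf:
  assumes G: "simple_graph G" and w: "w \<in> verts G" and d: "degree G w = 1"
  shows "ihara_poly G = ihara_poly (delete_vertex G w)"
proof -
  let ?V = "verts G" and ?M = "ihara_matrix G"
  have fin: "finite ?V" using simple_graph_finite[OF G] .
  obtain u where "{z \<in> ?V. adj G w z} = {u}"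
    using d card_1_singletonE by (metis degree_def)
  hence u: "u \<in> ?V" "adj G w u" "adj G u w" and leaf: "\<And>z. adj G w z \<or> adj G z w \<Longrightarrow> z = u"
    using simple_graph_adj_verts[OF G] simple_graph_adj_sym[OF G] by blast+
  have uw: "u \<noteq> w" using u(2) simple_graph_no_loop[OF G] by metis
  have "ihara_poly G = det_on (?V - {w})
      (\<lambda>v z. if v = u \<and> z = u then ?M u u - ?M u w * ?M w u else ?M v z)"
    unfolding ihara_poly_eq_det_on
  proof (rule det_on_eliminate_pendant[OF fin u(1) w uw])
    show "?M w w = 1"
      using d simple_graph_no_loop[OF G] by (simp add: ihara_matrix_def adj_matrix_def one_pCons)
    show "?M w z = 0" "?M z w = 0" if "z \<noteq> u" "z \<noteq> w" for z
      using that leaf[of z] by (auto simp: ihara_matrix_def adj_matrix_def)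
  qed
  also have "\<dots> = ihara_poly (delete_vertex G w)"
    unfolding ihara_poly_eq_det_on verts_delete_vertex using fin leaf
    by (intro det_on_cong) (simp_all add: ihara_matrix_delete_leaf[OF G u(3)])
  finally show ?thesis .
qed

lemma ihara_poly_eq_of_ihara_zeta_eq:
  assumes G: "simple_graph G" and H: "simple_graph H"
    and n: "card (verts G) = card (verts H)" and m: "num_edges G = num_edges H"
    and eq: "ihara_zeta G = ihara_zeta H"
  shows "ihara_poly G = ihara_poly H"
proof -
  define c where "c = (1 - fps_X ^ 2 :: real fps) powi (int (card (verts G)) - int (num_edges G))"
  have "(1 - fps_X ^ 2 :: real fps) $ 0 = 1" by (simp add: fps_X_power_iff)
  hence c0: "c $ 0 \<noteq> 0" by (auto simp: c_def power_int_def fps_power_zeroth)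
  have "c * inverse (fps_of_poly (ihara_poly G)) = c * inverse (fps_of_poly (ihara_poly H))"
    using eq n m by (simp add: ihara_zeta_def c_def)
  hence "inverse (fps_of_poly (ihara_poly G)) = inverse (fps_of_poly (ihara_poly H))"
    using inverse_mult_eq_1[OF c0] by (metis mult.assoc mult_1)
  hence "inverse (inverse (fps_of_poly (ihara_poly G))) = inverse (inverse (fps_of_poly (ihara_poly H)))"
    by simp
  hence "fps_of_poly (ihara_poly G) = fps_of_poly (ihara_poly H)"
    using coeff_ihara_poly_0[OF G] coeff_ihara_poly_0[OF H] by simp
  thus ?thesis by simp
qed

lemma ihara_poly_delete_low_degree:
  assumes "simple_graph G" "w \<in> verts G" "degree G w \<le> 1"
  shows "ihara_poly G = (if degree G w = 0 then [:1, 0, -1:] else 1) * ihara_poly (delete_vertex G w)"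
  using assms ihara_poly_delete_isolated[of G w] ihara_poly_delete_leaf[of G w] by (cases "degree G w") auto

lemma ihara_poly_coalescence_delete_low_degree:
  assumes G: "simple_graph G" and x: "x \<in> verts G" and \<Gamma>: "simple_graph \<Gamma>"
    and w: "w \<in> verts \<Gamma>" "w \<noteq> y" "degree \<Gamma> w \<le> 1"
  shows "ihara_poly (coalescence G x \<Gamma> y) =
    (if degree \<Gamma> w = 0 then [:1, 0, -1:] else 1) * ihara_poly (coalescence G x (delete_vertex \<Gamma> w) y)"
proof -
  have "simple_graph (coalescence G x \<Gamma> y)" by (rule simple_graph_coalescence[OF G \<Gamma> x])
  moreover have "Inr w \<in> verts (coalescence G x \<Gamma> y)" using w by simp
  moreover have "degree (coalescence G x \<Gamma> y) (Inr w) = degree \<Gamma> w"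
    by (rule degree_coalescence_Inr[OF \<Gamma> x w(2)])
  ultimately show ?thesis
    using ihara_poly_delete_low_degree[of "coalescence G x \<Gamma> y" "Inr w"] w(3)
    by (simp add: delete_vertex_coalescence[OF w(2)])
qed

lemma ihara_poly_cone_coalescence_delete_isolated:
  assumes G: "simple_graph G" and x: "x \<in> verts G" and \<Gamma>: "simple_graph \<Gamma>"
    and w: "w \<in> verts \<Gamma>" "w \<noteq> y" "degree \<Gamma> w = 0"
  shows "ihara_poly (cone (coalescence G x \<Gamma> y)) = ihara_poly (cone (coalescence G x (delete_vertex \<Gamma> w) y))"
proof -
  have H: "simple_graph (coalescence G x \<Gamma> y)" by (rule simple_graph_coalescence[OF G \<Gamma> x])
  have wH: "Inr w \<in> verts (coalescence G x \<Gamma> y)" using w by simp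
  have "degree (cone (coalescence G x \<Gamma> y)) (Some (Inr w)) = 1"
    using degree_cone_Some[OF H wH] degree_coalescence_Inr[OF \<Gamma> x w(2)] w(3) by simp
  from ihara_poly_delete_leaf[OF simple_graph_cone[OF H] _ this] wH
  show ?thesis by (simp add: delete_vertex_cone delete_vertex_coalescence[OF w(2)])
qed

lemma coalescence_prune_low_degree:
  fixes \<Gamma> :: "'b graph" and y :: 'b
  assumes "simple_graph \<Gamma>" "y \<in> verts \<Gamma>"
  obtains \<Gamma>' q where "simple_graph \<Gamma>'" "y \<in> verts \<Gamma>'" "\<And>w. w \<in> verts \<Gamma>' - {y} \<Longrightarrow> 2 \<le> degree \<Gamma>' w"
    "q \<noteq> 0" "\<And>(G :: 'a graph) x. simple_graph G \<Longrightarrow> x \<in> verts G \<Longrightarrow>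
       ihara_poly (coalescence G x \<Gamma> y) = q * ihara_poly (coalescence G x \<Gamma>' y)"
proof -
  have "\<exists>\<Gamma>' q. simple_graph \<Gamma>' \<and> y \<in> verts \<Gamma>' \<and> (\<forall>w\<in>verts \<Gamma>' - {y}. 2 \<le> degree \<Gamma>' w) \<and> q \<noteq> 0 \<and>
      (\<forall>(G :: 'a graph) x. simple_graph G \<and> x \<in> verts G \<longrightarrow>
         ihara_poly (coalescence G x \<Gamma> y) = q * ihara_poly (coalescence G x \<Gamma>' y))"
    using assms
  proof (induction "card (verts \<Gamma>)" arbitrary: \<Gamma> rule: less_induct)
    case less
    note \<Gamma> = less.prems(1) and y = less.prems(2)
    show ?case
    proof (cases "\<exists>w\<in>verts \<Gamma> - {y}. degree \<Gamma> w \<le> 1")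
      case False
      have "\<not> degree \<Gamma> w \<le> 1" if "w \<in> verts \<Gamma> - {y}" for w using False that by blast
      hence "\<forall>w\<in>verts \<Gamma> - {y}. 2 \<le> degree \<Gamma> w" by fastforce
      thus ?thesis using \<Gamma> y by (intro exI[of _ \<Gamma>] exI[of _ 1]) auto
    next
      case True
      then obtain w where w: "w \<in> verts \<Gamma>" "w \<noteq> y" "degree \<Gamma> w \<le> 1" by blast
      define r :: "real poly" where "r = (if degree \<Gamma> w = 0 then [:1, 0, -1:] else 1)"
      have "card (verts (delete_vertex \<Gamma> w)) < card (verts \<Gamma>)"
        using card_Diff1_less[OF simple_graph_finite[OF \<Gamma>] w(1)] by simp
      then obtain \<Gamma>' q where IH: "simple_graph \<Gamma>'" "y \<in> verts \<Gamma>'" "\<forall>w\<in>verts \<Gamma>' - {y}. 2 \<le> degree \<Gamma>' w"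
        "q \<noteq> 0" "\<forall>(G :: 'a graph) x. simple_graph G \<and> x \<in> verts G \<longrightarrow>
          ihara_poly (coalescence G x (delete_vertex \<Gamma> w) y) = q * ihara_poly (coalescence G x \<Gamma>' y)"
        using less.hyps[OF _ simple_graph_delete_vertex[OF \<Gamma>]] y w(2) by (metis Diff_iff singletonD verts_delete_vertex)
      have "ihara_poly (coalescence G x \<Gamma> y) = r * ihara_poly (coalescence G x (delete_vertex \<Gamma> w) y)"
        if "simple_graph G" "x \<in> verts G" for G :: "'a graph" and x
        unfolding r_def by (rule ihara_poly_coalescence_delete_low_degree[OF that \<Gamma> w])
      moreover have "r \<noteq> 0" by (simp add: r_def)
      ultimately show ?thesis using IH by (intro exI[of _ \<Gamma>'] exI[of _ "r * q"]) auto
    qed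
  qed
  thus thesis using that by blast
qed

lemma cone_coalescence_prune_isolated:
  fixes \<Gamma> :: "'b graph" and y :: 'b
  assumes "simple_graph \<Gamma>" "y \<in> verts \<Gamma>"
  obtains \<Gamma>' where "simple_graph \<Gamma>'" "y \<in> verts \<Gamma>'" "\<And>w. w \<in> verts \<Gamma>' - {y} \<Longrightarrow> 1 \<le> degree \<Gamma>' w"
    "\<And>(G :: 'a graph) x. simple_graph G \<Longrightarrow> x \<in> verts G \<Longrightarrow>
       ihara_poly (cone (coalescence G x \<Gamma> y)) = ihara_poly (cone (coalescence G x \<Gamma>' y))"
proof -
  have "\<exists>\<Gamma>'. simple_graph \<Gamma>' \<and> y \<in> verts \<Gamma>' \<and> (\<forall>w\<in>verts \<Gamma>' - {y}. 1 \<le> degree \<Gamma>' w) \<and>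
      (\<forall>(G :: 'a graph) x. simple_graph G \<and> x \<in> verts G \<longrightarrow>
         ihara_poly (cone (coalescence G x \<Gamma> y)) = ihara_poly (cone (coalescence G x \<Gamma>' y)))"
    using assms
  proof (induction "card (verts \<Gamma>)" arbitrary: \<Gamma> rule: less_induct)
    case less
    note \<Gamma> = less.prems(1) and y = less.prems(2)
    show ?case
    proof (cases "\<exists>w\<in>verts \<Gamma> - {y}. degree \<Gamma> w = 0")
      case False
      hence "\<forall>w\<in>verts \<Gamma> - {y}. 1 \<le> degree \<Gamma> w" by (simp add: Suc_le_eq)
      thus ?thesis using \<Gamma> y by (intro exI[of _ \<Gamma>]) auto
    next
      case True
      then obtain w where w: "w \<in> verts \<Gamma>" "w \<noteq> y" "degree \<Gamma> w = 0" by blast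
      have "card (verts (delete_vertex \<Gamma> w)) < card (verts \<Gamma>)"
        using card_Diff1_less[OF simple_graph_finite[OF \<Gamma>] w(1)] by simp
      then obtain \<Gamma>' where IH: "simple_graph \<Gamma>'" "y \<in> verts \<Gamma>'" "\<forall>w\<in>verts \<Gamma>' - {y}. 1 \<le> degree \<Gamma>' w"
        "\<forall>(G :: 'a graph) x. simple_graph G \<and> x \<in> verts G \<longrightarrow>
          ihara_poly (cone (coalescence G x (delete_vertex \<Gamma> w) y)) = ihara_poly (cone (coalescence G x \<Gamma>' y))"
        using less.hyps[OF _ simple_graph_delete_vertex[OF \<Gamma>]] y w(2) by (metis Diff_iff singletonD verts_delete_vertex)
      have "ihara_poly (cone (coalescence G x \<Gamma> y)) = ihara_poly (cone (coalescence G x (delete_vertex \<Gamma> w) y))"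
        if "simple_graph G" "x \<in> verts G" for G :: "'a graph" and x
        by (rule ihara_poly_cone_coalescence_delete_isolated[OF that \<Gamma> w])
      thus ?thesis using IH by (intro exI[of _ \<Gamma>']) auto
    qed
  qed
  thus thesis using that by blast
qed

section \<open>Coalescing a cospectral rooted pair\<close>

locale cospectral_rooted_pair =
  fixes G1 G2 :: "'a graph" and x1 x2 :: 'a
  assumes simple1: "simple_graph G1" and simple2: "simple_graph G2"
    and root1: "x1 \<in> verts G1" and root2: "x2 \<in> verts G2"
    and char_poly_eq: "char_poly G1 = char_poly G2"
    and char_poly_delete_eq: "char_poly (delete_vertex G1 x1) = char_poly (delete_vertex G2 x2)"
begin

lemma degree_root_eq: "degree G1 x1 = degree G2 x2"
  using num_edges_delete_vertex[OF simple1 root1] num_edges_delete_vertex[OF simple2 root2]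
    num_edges_eq_of_char_poly_eq[OF simple1 simple2 char_poly_eq]
    num_edges_eq_of_char_poly_eq[OF simple_graph_delete_vertex[OF simple1]
      simple_graph_delete_vertex[OF simple2] char_poly_delete_eq]
  by simp

context
  fixes \<Gamma> :: "'b graph" and y :: 'b
  assumes \<Gamma>: "simple_graph \<Gamma>" and y: "y \<in> verts \<Gamma>"
begin

lemma char_poly_coalescence_eq: "char_poly (coalescence G1 x1 \<Gamma> y) = char_poly (coalescence G2 x2 \<Gamma> y)"
  using char_poly_coalescence[OF simple1 \<Gamma> root1 y] char_poly_coalescence[OF simple2 \<Gamma> root2 y]
    char_poly_eq char_poly_delete_eq by simp

lemma card_verts_coalescence_eq:
  "card (verts (coalescence G1 x1 \<Gamma> y)) = card (verts (coalescence G2 x2 \<Gamma> y))"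
  by (rule card_verts_eq_of_char_poly_eq[OF simple_graph_coalescence[OF simple1 \<Gamma> root1]
        simple_graph_coalescence[OF simple2 \<Gamma> root2] char_poly_coalescence_eq])

lemma num_edges_coalescence_eq:
  "num_edges (coalescence G1 x1 \<Gamma> y) = num_edges (coalescence G2 x2 \<Gamma> y)"
  by (rule num_edges_eq_of_char_poly_eq[OF simple_graph_coalescence[OF simple1 \<Gamma> root1]
        simple_graph_coalescence[OF simple2 \<Gamma> root2] char_poly_coalescence_eq])

lemma ihara_poly_coalescence_eq_of_ihara_zeta_eq:
  "ihara_zeta (coalescence G1 x1 \<Gamma> y) = ihara_zeta (coalescence G2 x2 \<Gamma> y) \<Longrightarrow>
    ihara_poly (coalescence G1 x1 \<Gamma> y) = ihara_poly (coalescence G2 x2 \<Gamma> y)"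
  by (rule ihara_poly_eq_of_ihara_zeta_eq[OF simple_graph_coalescence[OF simple1 \<Gamma> root1]
        simple_graph_coalescence[OF simple2 \<Gamma> root2] card_verts_coalescence_eq num_edges_coalescence_eq])

lemma card_verts_cone_coalescence_eq:
  "card (verts (cone (coalescence G1 x1 \<Gamma> y))) = card (verts (cone (coalescence G2 x2 \<Gamma> y)))"
  by (simp only: card_verts_cone[OF simple_graph_coalescence[OF simple1 \<Gamma> root1]]
      card_verts_cone[OF simple_graph_coalescence[OF simple2 \<Gamma> root2]] card_verts_coalescence_eq)

lemma ihara_poly_cone_coalescence_eq_of_ihara_zeta_eq:
  "ihara_zeta (cone (coalescence G1 x1 \<Gamma> y)) = ihara_zeta (cone (coalescence G2 x2 \<Gamma> y)) \<Longrightarrow>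
    ihara_poly (cone (coalescence G1 x1 \<Gamma> y)) = ihara_poly (cone (coalescence G2 x2 \<Gamma> y))"
  using simple_graph_coalescence[OF simple1 \<Gamma> root1] simple_graph_coalescence[OF simple2 \<Gamma> root2]
  by (intro ihara_poly_eq_of_ihara_zeta_eq card_verts_cone_coalescence_eq simple_graph_cone)
    (simp_all only: num_edges_cone num_edges_coalescence_eq card_verts_coalescence_eq)

end

lemma coeff_ihara_poly_coalescence_top:
  assumes G: "simple_graph G" and x: "x \<in> verts G" and dx: "degree G x = degree G1 x1"
    and \<Gamma>: "simple_graph \<Gamma>"
  shows "coeff (ihara_poly (coalescence G x \<Gamma> y)) (2 * card (verts (coalescence G x \<Gamma> y))) =
    (\<Prod>u\<in>verts G - {x}. real (degree G u) - 1) * (real (degree G1 x1 + degree \<Gamma> y) - 1) *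
    (\<Prod>w\<in>verts \<Gamma> - {y}. real (degree \<Gamma> w) - 1)"
  using coeff_ihara_poly_top[OF simple_graph_coalescence[OF G \<Gamma> x]]
    prod_degree_coalescence[OF G \<Gamma> x, of "\<lambda>d. real d - 1"] dx
  by simp

lemma ihara_zeta_coalescence_neq:
  assumes dx: "2 \<le> degree G1 x1"
    and U: "(\<Prod>v\<in>verts G1 - {x1}. int (degree G1 v) - 1) \<noteq> (\<Prod>v\<in>verts G2 - {x2}. int (degree G2 v) - 1)"
    and \<Gamma>: "simple_graph \<Gamma>" and y: "y \<in> verts \<Gamma>"
  shows "ihara_zeta (coalescence G1 x1 \<Gamma> y) \<noteq> ihara_zeta (coalescence G2 x2 \<Gamma> y)"
proof
  assume zeta: "ihara_zeta (coalescence G1 x1 \<Gamma> y) = ihara_zeta (coalescence G2 x2 \<Gamma> y)"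
  obtain \<Gamma>' q where \<Gamma>': "simple_graph \<Gamma>'" "y \<in> verts \<Gamma>'" "\<And>w. w \<in> verts \<Gamma>' - {y} \<Longrightarrow> 2 \<le> degree \<Gamma>' w"
    and q: "q \<noteq> 0" and prune: "\<And>(G :: 'a graph) x. simple_graph G \<Longrightarrow> x \<in> verts G \<Longrightarrow>
       ihara_poly (coalescence G x \<Gamma> y) = q * ihara_poly (coalescence G x \<Gamma>' y)"
    using coalescence_prune_low_degree[OF \<Gamma> y] by blast
  from ihara_poly_coalescence_eq_of_ihara_zeta_eq[OF \<Gamma> y zeta]
  have "ihara_poly (coalescence G1 x1 \<Gamma>' y) = ihara_poly (coalescence G2 x2 \<Gamma>' y)"
    using prune[OF simple1 root1] prune[OF simple2 root2] q by simp
  moreover note card_verts_coalescence_eq[OF \<Gamma>'(1,2)]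
  ultimately have "(\<Prod>v\<in>verts G1 - {x1}. real (degree G1 v) - 1) * (real (degree G1 x1 + degree \<Gamma>' y) - 1) *
      (\<Prod>w\<in>verts \<Gamma>' - {y}. real (degree \<Gamma>' w) - 1) =
    (\<Prod>v\<in>verts G2 - {x2}. real (degree G2 v) - 1) * (real (degree G1 x1 + degree \<Gamma>' y) - 1) *
      (\<Prod>w\<in>verts \<Gamma>' - {y}. real (degree \<Gamma>' w) - 1)"
    by (simp only: coeff_ihara_poly_coalescence_top[OF simple1 root1 refl \<Gamma>'(1), symmetric]
        coeff_ihara_poly_coalescence_top[OF simple2 root2 degree_root_eq[symmetric] \<Gamma>'(1), symmetric])
  moreover have "(\<Prod>w\<in>verts \<Gamma>' - {y}. real (degree \<Gamma>' w) - 1) \<noteq> 0"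
    using \<Gamma>'(3) simple_graph_finite[OF \<Gamma>'(1)] by (subst prod_zero_iff) force+
  ultimately have "(\<Prod>v\<in>verts G1 - {x1}. real (degree G1 v) - 1) = (\<Prod>v\<in>verts G2 - {x2}. real (degree G2 v) - 1)"
    using dx by simp
  hence "real_of_int (\<Prod>v\<in>verts G1 - {x1}. int (degree G1 v) - 1) =
      real_of_int (\<Prod>v\<in>verts G2 - {x2}. int (degree G2 v) - 1)"
    by (simp add: of_int_prod)
  thus False using U by (simp only: of_int_eq_iff)
qed

lemma coeff_ihara_poly_cone_coalescence_top:
  assumes G: "simple_graph G" and x: "x \<in> verts G" and dx: "degree G x = degree G1 x1"
    and \<Gamma>: "simple_graph \<Gamma>"
  shows "coeff (ihara_poly (cone (coalescence G x \<Gamma> y))) (2 * card (verts (cone (coalescence G x \<Gamma> y)))) =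
    (real (card (verts (coalescence G x \<Gamma> y))) - 1) *
    ((\<Prod>u\<in>verts G - {x}. real (degree G u)) * real (degree G1 x1 + degree \<Gamma> y) *
     (\<Prod>w\<in>verts \<Gamma> - {y}. real (degree \<Gamma> w)))"
proof -
  have H: "simple_graph (coalescence G x \<Gamma> y)" by (rule simple_graph_coalescence[OF G \<Gamma> x])
  show ?thesis
    using coeff_ihara_poly_top[OF simple_graph_cone[OF H]] prod_degree_cone[OF H, of "\<lambda>d. real d - 1"]
      prod_degree_coalescence[OF G \<Gamma> x, of real] dx
    by simp
qed

lemma ihara_zeta_cone_coalescence_neq:
  assumes dx: "1 \<le> degree G1 x1"
    and U: "(\<Prod>v\<in>verts G1 - {x1}. int (degree G1 v)) \<noteq> (\<Prod>v\<in>verts G2 - {x2}. int (degree G2 v))"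
    and \<Gamma>: "simple_graph \<Gamma>" and y: "y \<in> verts \<Gamma>"
  shows "ihara_zeta (cone (coalescence G1 x1 \<Gamma> y)) \<noteq> ihara_zeta (cone (coalescence G2 x2 \<Gamma> y))"
proof
  assume zeta: "ihara_zeta (cone (coalescence G1 x1 \<Gamma> y)) = ihara_zeta (cone (coalescence G2 x2 \<Gamma> y))"
  obtain \<Gamma>' where \<Gamma>': "simple_graph \<Gamma>'" "y \<in> verts \<Gamma>'" "\<And>w. w \<in> verts \<Gamma>' - {y} \<Longrightarrow> 1 \<le> degree \<Gamma>' w"
    and prune: "\<And>(G :: 'a graph) x. simple_graph G \<Longrightarrow> x \<in> verts G \<Longrightarrow>
       ihara_poly (cone (coalescence G x \<Gamma> y)) = ihara_poly (cone (coalescence G x \<Gamma>' y))"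
    using cone_coalescence_prune_isolated[OF \<Gamma> y] by blast
  from ihara_poly_cone_coalescence_eq_of_ihara_zeta_eq[OF \<Gamma> y zeta]
  have "ihara_poly (cone (coalescence G1 x1 \<Gamma>' y)) = ihara_poly (cone (coalescence G2 x2 \<Gamma>' y))"
    using prune[OF simple1 root1] prune[OF simple2 root2] by simp
  moreover note card_verts_cone_coalescence_eq[OF \<Gamma>'(1,2)]
  ultimately have "(real (card (verts (coalescence G1 x1 \<Gamma>' y))) - 1) *
      ((\<Prod>v\<in>verts G1 - {x1}. real (degree G1 v)) * real (degree G1 x1 + degree \<Gamma>' y) *
       (\<Prod>w\<in>verts \<Gamma>' - {y}. real (degree \<Gamma>' w))) =
    (real (card (verts (coalescence G2 x2 \<Gamma>' y))) - 1) *
      ((\<Prod>v\<in>verts G2 - {x2}. real (degree G2 v)) * real (degree G1 x1 + degree \<Gamma>' y) *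
       (\<Prod>w\<in>verts \<Gamma>' - {y}. real (degree \<Gamma>' w)))"
    by (simp only: coeff_ihara_poly_cone_coalescence_top[OF simple1 root1 refl \<Gamma>'(1), symmetric]
        coeff_ihara_poly_cone_coalescence_top[OF simple2 root2 degree_root_eq[symmetric] \<Gamma>'(1), symmetric])
  moreover have "2 \<le> card (verts (coalescence G1 x1 \<Gamma>' y))"
    using degree_pos_imp_card_verts_ge_2[OF simple_graph_coalescence[OF simple1 \<Gamma>'(1) root1], of "Inl x1"]
      degree_coalescence_root[OF simple1 \<Gamma>'(1)] root1 dx by simp
  moreover have "(\<Prod>w\<in>verts \<Gamma>' - {y}. real (degree \<Gamma>' w)) \<noteq> 0"
    using \<Gamma>'(3) simple_graph_finite[OF \<Gamma>'(1)] by (subst prod_zero_iff) force+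
  ultimately have "(\<Prod>v\<in>verts G1 - {x1}. real (degree G1 v)) = (\<Prod>v\<in>verts G2 - {x2}. real (degree G2 v))"
    using dx card_verts_coalescence_eq[OF \<Gamma>'(1,2)] by simp
  hence "real_of_int (\<Prod>v\<in>verts G1 - {x1}. int (degree G1 v)) =
      real_of_int (\<Prod>v\<in>verts G2 - {x2}. int (degree G2 v))"
    by (simp add: of_int_prod)
  thus False using U by (simp only: of_int_eq_iff)
qed

end

theorem proposition4p4:
  fixes G1 G2 :: "'a graph" and x1 x2 :: 'a and n :: nat
  assumes "simple_graph G1" and "simple_graph G2"
    and "card (verts G1) = n" and "card (verts G2) = n"
    and "adj_spectrum G1 = adj_spectrum G2"
    and "degree_sequence G1 \<noteq> degree_sequence G2"
    and "x1 \<in> verts G1" and "x2 \<in> verts G2"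
    and "adj_spectrum (delete_vertex G1 x1) = adj_spectrum (delete_vertex G2 x2)"
  shows "(\<forall>(\<Gamma> :: 'b graph) y. simple_graph \<Gamma> \<and> y \<in> verts \<Gamma> \<longrightarrow>
            adj_spectrum (coalescence G1 x1 \<Gamma> y) = adj_spectrum (coalescence G2 x2 \<Gamma> y))
       \<and> (min_degree_at_least G1 2 \<and> min_degree_at_least G2 2 \<and>
          (\<Prod>v \<in> verts G1 - {x1}. int (degree G1 v) - 1) \<noteq>
          (\<Prod>v \<in> verts G2 - {x2}. int (degree G2 v) - 1) \<longrightarrow>
          (\<forall>(\<Gamma> :: 'b graph) y. simple_graph \<Gamma> \<and> y \<in> verts \<Gamma> \<longrightarrow>
            ihara_zeta (coalescence G1 x1 \<Gamma> y) \<noteq> ihara_zeta (coalescence G2 x2 \<Gamma> y)))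
       \<and> (min_degree_at_least G1 1 \<and> min_degree_at_least G2 1 \<and>
          (\<Prod>v \<in> verts G1 - {x1}. int (degree G1 v)) \<noteq>
          (\<Prod>v \<in> verts G2 - {x2}. int (degree G2 v)) \<longrightarrow>
          (\<forall>(\<Gamma> :: 'b graph) y. simple_graph \<Gamma> \<and> y \<in> verts \<Gamma> \<longrightarrow>
            ihara_zeta (cone (coalescence G1 x1 \<Gamma> y)) \<noteq>
            ihara_zeta (cone (coalescence G2 x2 \<Gamma> y))))"
proof -
  interpret cospectral_rooted_pair G1 G2 x1 x2
    using assms(1,2,7,8) char_poly_eq_of_adj_spectrum_eq[OF assms(1,2,5)]
      char_poly_eq_of_adj_spectrum_eq[OF simple_graph_delete_vertex[OF assms(1)]
        simple_graph_delete_vertex[OF assms(2)] assms(9)]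
    by unfold_locales
  have "adj_spectrum (coalescence G1 x1 \<Gamma> y) = adj_spectrum (coalescence G2 x2 \<Gamma> y)"
    if "simple_graph \<Gamma>" "y \<in> verts \<Gamma>" for \<Gamma> :: "'b graph" and y
    using char_poly_coalescence_eq[OF that] by (simp add: adj_spectrum_def)
  moreover have "ihara_zeta (coalescence G1 x1 \<Gamma> y) \<noteq> ihara_zeta (coalescence G2 x2 \<Gamma> y)"
    if "min_degree_at_least G1 2" "(\<Prod>v \<in> verts G1 - {x1}. int (degree G1 v) - 1) \<noteq>
        (\<Prod>v \<in> verts G2 - {x2}. int (degree G2 v) - 1)" "simple_graph \<Gamma>" "y \<in> verts \<Gamma>"
    for \<Gamma> :: "'b graph" and y
    using ihara_zeta_coalescence_neq[OF _ that(2-4)] that(1) root1 by (simp add: min_degree_at_least_def)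
  moreover have "ihara_zeta (cone (coalescence G1 x1 \<Gamma> y)) \<noteq> ihara_zeta (cone (coalescence G2 x2 \<Gamma> y))"
    if "min_degree_at_least G1 1" "(\<Prod>v \<in> verts G1 - {x1}. int (degree G1 v)) \<noteq>
        (\<Prod>v \<in> verts G2 - {x2}. int (degree G2 v))" "simple_graph \<Gamma>" "y \<in> verts \<Gamma>"
    for \<Gamma> :: "'b graph" and y
    using ihara_zeta_cone_coalescence_neq[OF _ that(2-4)] that(1) root1 by (simp add: min_degree_at_least_def)
  ultimately show ?thesis by blast
qed

end
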